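(* Let $(\mathcal A;\mathcal E)$ be an exact category and let $\mathcal J_1,\mathcal J_2$ be special preenveloping ideals of $\mathcal A$. Then $\mathcal J_1\cap\mathcal J_2$ is a special preenveloping ideal. Moreover, if $B\in\mathcal A$, $m^1:B\to C^1$ is a special $\mathcal J_1$-preenvelope of $B$ and $m^2:B\to C^2$ is a special $\mathcal J_2$-preenvelope of $B$, then the pushout $m^1\amalg_B m^2: B\to C^1\amalg_B C^2$ is a special $(\mathcal J_1\cap\mathcal J_2)$-preenvelope of $B$.
   Context: $(\mathcal A;\mathcal E)$ is an exact category: an additive category with a class $\mathcal E$ of kernel–cokernel pairs (conflations) $X\xrightarrow{m}Y\xrightarrow{p}Z$ ($m$ an inflation, $p$ a deflation) satisfying the Quillen–Keller axioms. $\mathrm{Ext}(A,B)$ denotes the group of (equivalence classes of) conflations $B\to C\to A$. An ideal $\mathcal J$ of $\mathcal A$ is a family of subgroups $\mathcal J(A,B)\subseteq\mathrm{Hom}(A,B)$ closed under composition on either side with arbitrary morphisms. For morphisms $a:A_0\to A_1$ and $b:B_0\to B_1$, let $\mathrm{Ext}(a,b):\mathrm{Ext}(A_1,B_0)\to\mathrm{Ext}(A_0,B_1)$ be the map sending a conflation to its pushout along $b$ followed by pullback along $a$ (the diagonal of the commutative square formed by $\mathrm{Ext}(A_1,b),\mathrm{Ext}(a,B_0),\mathrm{Ext}(a,B_1),\mathrm{Ext}(A_0,b)$); $a,b$ are Ext-orthogonal if $\mathrm{Ext}(a,b)=0$. For a class $\mathcal M$ of morphisms, ${}^\perp\mathcal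 M$ is the ideal of morphisms $a$ with $\mathrm{Ext}(a,m)=0$ for all $m\in\mathcal M$. A special $\mathcal J$-preenvelope of an object $B$ is a morphism $j:B\to C_0$ in $\mathcal J$ for which there exist conflations $B\xrightarrow{j}C_0\to A_0$ and $B\to C_1\to A_1$ and a morphism of conflations between them with components $1_B$, some $c:C_0\to C_1$, and some $a:A_0\to A_1$ with $a\in{}^\perp\mathcal J$. The ideal $\mathcal J$ is special preenveloping if every object of $\mathcal A$ has a special $\mathcal J$-preenvelope. *)

theory Defs
  imports Main
begin

record ('o, 'm) addcat =
  cObj  :: "'o set"
  cMor  :: "'m set"
  src   :: "'m \<Rightarrow> 'o"
  tgt   :: "'m \<Rightarrow> 'o"
  ident :: "'o \<Rightarrow> 'm"
  cmp   :: "'m \<Rightarrow> 'm \<Rightarrow> 'm"   (* cmp C g f = g \<circ> f *)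
  madd  :: "'m \<Rightarrow> 'm \<Rightarrow> 'm"
  mzero :: "'o \<Rightarrow> 'o \<Rightarrow> 'm"
  mneg  :: "'m \<Rightarrow> 'm"

definition Hom :: "('o,'m) addcat \<Rightarrow> 'o \<Rightarrow> 'o \<Rightarrow> 'm set" where
  "Hom C A B = {f \<in> cMor C. src C f = A \<and> tgt C f = B}"

definition category :: "('o,'m) addcat \<Rightarrow> bool" where
  "category C \<longleftrightarrow>
     (\<forall>f\<in>cMor C. src C f \<in> cObj C \<and> tgt C f \<in> cObj C) \<and>
     (\<forall>A\<in>cObj C. ident C A \<in> Hom C A A) \<and>
     (\<forall>f\<in>cMor C. \<forall>g\<in>cMor C. tgt C f = src C g \<longrightarrow>
         cmp C g f \<in> Hom C (src C f) (tgt C g)) \<and>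
     (\<forall>f\<in>cMor C. cmp C f (ident C (src C f)) = f \<and> cmp C (ident C (tgt C f)) f = f) \<and>
     (\<forall>f\<in>cMor C. \<forall>g\<in>cMor C. \<forall>h\<in>cMor C. tgt C f = src C g \<and> tgt C g = src C h \<longrightarrow>
         cmp C h (cmp C g f) = cmp C (cmp C h g) f)"

definition preadditive :: "('o,'m) addcat \<Rightarrow> bool" where
  "preadditive C \<longleftrightarrow> category C \<and>
     (\<forall>A\<in>cObj C. \<forall>B\<in>cObj C.
        mzero C A B \<in> Hom C A B \<and>
        (\<forall>f\<in>Hom C A B. \<forall>g\<in>Hom C A B. madd C f g \<in> Hom C A B \<and> madd C f g = madd C g f) \<and>
        (\<forall>f\<in>Hom C A B. \<forall>g\<in>Hom C A B. \<forall>h\<in>Hom C A B.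
            madd C (madd C f g) h = madd C f (madd C g h)) \<and>
        (\<forall>f\<in>Hom C A B. madd C f (mzero C A B) = f \<and> mneg C f \<in> Hom C A B \<and>
            madd C f (mneg C f) = mzero C A B)) \<and>
     (\<forall>f\<in>cMor C. \<forall>g\<in>Hom C (src C f) (tgt C f). \<forall>h\<in>cMor C. src C h = tgt C f \<longrightarrow>
         cmp C h (madd C f g) = madd C (cmp C h f) (cmp C h g)) \<and>
     (\<forall>f\<in>cMor C. \<forall>g\<in>Hom C (src C f) (tgt C f). \<forall>k\<in>cMor C. tgt C k = src C f \<longrightarrow>
         cmp C (madd C f g) k = madd C (cmp C f k) (cmp C g k))"

definition additive :: "('o,'m) addcat \<Rightarrow> bool" where
  "additive C \<longleftrightarrow> preadditive C \<and>
     (\<exists>Z\<in>cObj C. \<forall>A\<in>cObj C. Hom C Z A = {mzero C Z A} \<and> Hom C A Z = {mzero C A Z}) \<and>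
     (\<forall>A\<in>cObj C. \<forall>B\<in>cObj C. \<exists>S i1 i2 p1 p2.
        S \<in> cObj C \<and> i1 \<in> Hom C A S \<and> i2 \<in> Hom C B S \<and> p1 \<in> Hom C S A \<and> p2 \<in> Hom C S B \<and>
        cmp C p1 i1 = ident C A \<and> cmp C p2 i2 = ident C B \<and>
        cmp C p2 i1 = mzero C A B \<and> cmp C p1 i2 = mzero C B A \<and>
        madd C (cmp C i1 p1) (cmp C i2 p2) = ident C S)"

definition iso :: "('o,'m) addcat \<Rightarrow> 'm \<Rightarrow> bool" where
  "iso C f \<longleftrightarrow> f \<in> cMor C \<and> (\<exists>g\<in>Hom C (tgt C f) (src C f).
      cmp C g f = ident C (src C f) \<and> cmp C f g = ident C (tgt C f))"

definition is_pushout :: "('o,'m) addcat \<Rightarrow> 'm \<Rightarrow> 'm \<Rightarrow> 'm \<Rightarrow> 'm \<Rightarrow> bool" where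
  "is_pushout C f g u v \<longleftrightarrow>
     f \<in> cMor C \<and> g \<in> cMor C \<and> u \<in> cMor C \<and> v \<in> cMor C \<and>
     src C f = src C g \<and> src C u = tgt C f \<and> src C v = tgt C g \<and> tgt C u = tgt C v \<and>
     cmp C u f = cmp C v g \<and>
     (\<forall>y\<in>cMor C. \<forall>z\<in>cMor C. src C y = tgt C f \<and> src C z = tgt C g \<and> tgt C y = tgt C z \<and>
        cmp C y f = cmp C z g \<longrightarrow>
        (\<exists>!h. h \<in> Hom C (tgt C u) (tgt C y) \<and> cmp C h u = y \<and> cmp C h v = z))"

definition is_pullback :: "('o,'m) addcat \<Rightarrow> 'm \<Rightarrow> 'm \<Rightarrow> 'm \<Rightarrow> 'm \<Rightarrow> bool" where
  "is_pullback C d q p a \<longleftrightarrow>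
     d \<in> cMor C \<and> q \<in> cMor C \<and> p \<in> cMor C \<and> a \<in> cMor C \<and>
     src C d = src C q \<and> tgt C d = src C p \<and> tgt C q = src C a \<and> tgt C p = tgt C a \<and>
     cmp C p d = cmp C a q \<and>
     (\<forall>y\<in>cMor C. \<forall>z\<in>cMor C. tgt C y = src C p \<and> tgt C z = src C a \<and> src C y = src C z \<and>
        cmp C p y = cmp C a z \<longrightarrow>
        (\<exists>!h. h \<in> Hom C (src C y) (src C d) \<and> cmp C d h = y \<and> cmp C q h = z))"

section \<open>Exact categories (Quillen--Keller axioms, as in Buehler)\<close>

definition is_kernel :: "('o,'m) addcat \<Rightarrow> 'm \<Rightarrow> 'm \<Rightarrow> bool" where
  "is_kernel C i p \<longleftrightarrow> i \<in> cMor C \<and> p \<in> cMor C \<and> tgt C i = src C p \<and>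
     cmp C p i = mzero C (src C i) (tgt C p) \<and>
     (\<forall>f\<in>cMor C. tgt C f = src C p \<and> cmp C p f = mzero C (src C f) (tgt C p) \<longrightarrow>
        (\<exists>!g. g \<in> Hom C (src C f) (src C i) \<and> cmp C i g = f))"

definition is_cokernel :: "('o,'m) addcat \<Rightarrow> 'm \<Rightarrow> 'm \<Rightarrow> bool" where
  "is_cokernel C p i \<longleftrightarrow> i \<in> cMor C \<and> p \<in> cMor C \<and> tgt C i = src C p \<and>
     cmp C p i = mzero C (src C i) (tgt C p) \<and>
     (\<forall>f\<in>cMor C. src C f = tgt C i \<and> cmp C f i = mzero C (src C i) (tgt C f) \<longrightarrow>
        (\<exists>!g. g \<in> Hom C (tgt C p) (tgt C f) \<and> cmp C g p = f))"

definition kc_pair :: "('o,'m) addcat \<Rightarrow> 'm \<Rightarrow> 'm \<Rightarrow> bool" where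
  "kc_pair C i p \<longleftrightarrow> is_kernel C i p \<and> is_cokernel C p i"

definition inflation :: "('m \<times> 'm) set \<Rightarrow> 'm \<Rightarrow> bool" where
  "inflation E i \<longleftrightarrow> (\<exists>p. (i, p) \<in> E)"

definition deflation :: "('m \<times> 'm) set \<Rightarrow> 'm \<Rightarrow> bool" where
  "deflation E p \<longleftrightarrow> (\<exists>i. (i, p) \<in> E)"

definition exact_category :: "('o,'m) addcat \<Rightarrow> ('m \<times> 'm) set \<Rightarrow> bool" where
  "exact_category C E \<longleftrightarrow> additive C \<and>
     (\<forall>(i, p)\<in>E. kc_pair C i p) \<and>
     \<comment> \<open>closed under isomorphisms of kernel-cokernel pairs\<close>
     (\<forall>(i, p)\<in>E. \<forall>i' p' f g h. i' \<in> cMor C \<and> p' \<in> cMor C \<and> tgt C i' = src C p' \<and>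
        f \<in> Hom C (src C i') (src C i) \<and> g \<in> Hom C (tgt C i') (tgt C i) \<and>
        h \<in> Hom C (tgt C p') (tgt C p) \<and> iso C f \<and> iso C g \<and> iso C h \<and>
        cmp C g i' = cmp C i f \<and> cmp C h p' = cmp C p g \<longrightarrow> (i', p') \<in> E) \<and>
     \<comment> \<open>[E0], [E0op]\<close>
     (\<forall>A\<in>cObj C. inflation E (ident C A) \<and> deflation E (ident C A)) \<and>
     \<comment> \<open>[E1], [E1op]\<close>
     (\<forall>i j. inflation E i \<and> inflation E j \<and> tgt C i = src C j \<longrightarrow> inflation E (cmp C j i)) \<and>
     (\<forall>p q. deflation E p \<and> deflation E q \<and> tgt C p = src C q \<longrightarrow> deflation E (cmp C q p)) \<and>
     \<comment> \<open>[E2]: pushouts of inflations exist and are inflations\<close>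
     (\<forall>i f. inflation E i \<and> f \<in> cMor C \<and> src C f = src C i \<longrightarrow>
        (\<exists>u v. is_pushout C i f u v \<and> inflation E v)) \<and>
     \<comment> \<open>[E2op]: pullbacks of deflations exist and are deflations\<close>
     (\<forall>p a. deflation E p \<and> a \<in> cMor C \<and> tgt C a = tgt C p \<longrightarrow>
        (\<exists>d q. is_pullback C d q p a \<and> deflation E q))"

text \<open>A conflation B -m-> C -p-> A is split (represents 0 in Ext(A,B)) iff m has a retraction.\<close>
definition split_confl :: "('o,'m) addcat \<Rightarrow> 'm \<Rightarrow> 'm \<Rightarrow> bool" where
  "split_confl C m p \<longleftrightarrow> (\<exists>r \<in> Hom C (tgt C m) (src C m). cmp C r m = ident C (src C m))"

text \<open>(m',p') is the pushout of the conflation (m,p) along b (Ext(A,b)).\<close>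
definition confl_pushout :: "('o,'m) addcat \<Rightarrow> ('m \<times> 'm) set \<Rightarrow> 'm \<Rightarrow> 'm \<Rightarrow> 'm \<Rightarrow> 'm \<Rightarrow> 'm \<Rightarrow> bool" where
  "confl_pushout C E m p b m' p' \<longleftrightarrow> (m', p') \<in> E \<and> src C m' = tgt C b \<and> tgt C p' = tgt C p \<and>
     (\<exists>c \<in> Hom C (tgt C m) (tgt C m'). is_pushout C m b c m' \<and> cmp C p' c = p)"

text \<open>(m',p') is the pullback of the conflation (m,p) along a (Ext(a,B)).\<close>
definition confl_pullback :: "('o,'m) addcat \<Rightarrow> ('m \<times> 'm) set \<Rightarrow> 'm \<Rightarrow> 'm \<Rightarrow> 'm \<Rightarrow> 'm \<Rightarrow> 'm \<Rightarrow> bool" where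
  "confl_pullback C E m p a m' p' \<longleftrightarrow> (m', p') \<in> E \<and> src C m' = src C m \<and> tgt C p' = src C a \<and>
     (\<exists>d \<in> Hom C (tgt C m') (tgt C m). is_pullback C d p' p a \<and> cmp C d m' = m)"

text \<open>Ext(a,b) = 0 for a : A0 -> A1, b : B0 -> B1: every conflation in Ext(A1,B0),
  pushed out along b and then pulled back along a, splits.\<close>
definition ext_orth :: "('o,'m) addcat \<Rightarrow> ('m \<times> 'm) set \<Rightarrow> 'm \<Rightarrow> 'm \<Rightarrow> bool" where
  "ext_orth C E a b \<longleftrightarrow> a \<in> cMor C \<and> b \<in> cMor C \<and>
     (\<forall>m p m1 p1 m2 p2. (m, p) \<in> E \<and> src C m = src C b \<and> tgt C p = tgt C a \<and>
        confl_pushout C E m p b m1 p1 \<and> confl_pullback C E m1 p1 a m2 p2 \<longrightarrow>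
        split_confl C m2 p2)"

definition perp_ideal :: "('o,'m) addcat \<Rightarrow> ('m \<times> 'm) set \<Rightarrow> 'm set \<Rightarrow> 'm set" where
  "perp_ideal C E M = {a \<in> cMor C. \<forall>m\<in>M. ext_orth C E a m}"

definition ideal :: "('o,'m) addcat \<Rightarrow> 'm set \<Rightarrow> bool" where
  "ideal C J \<longleftrightarrow> J \<subseteq> cMor C \<and>
     (\<forall>A\<in>cObj C. \<forall>B\<in>cObj C. mzero C A B \<in> J \<and>
        (\<forall>f\<in>J \<inter> Hom C A B. mneg C f \<in> J \<and> (\<forall>g\<in>J \<inter> Hom C A B. madd C f g \<in> J))) \<and>
     (\<forall>f\<in>J. \<forall>g\<in>cMor C. (tgt C f = src C g \<longrightarrow> cmp C g f \<in> J) \<and>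
                         (src C f = tgt C g \<longrightarrow> cmp C f g \<in> J))"

definition special_preenvelope ::
  "('o,'m) addcat \<Rightarrow> ('m \<times> 'm) set \<Rightarrow> 'm set \<Rightarrow> 'o \<Rightarrow> 'm \<Rightarrow> bool" where
  "special_preenvelope C E J B j \<longleftrightarrow> B \<in> cObj C \<and> j \<in> J \<and> src C j = B \<and>
     (\<exists>q0 i1 q1 c a. (j, q0) \<in> E \<and> (i1, q1) \<in> E \<and> src C i1 = B \<and>
        c \<in> Hom C (tgt C j) (tgt C i1) \<and> a \<in> Hom C (tgt C q0) (tgt C q1) \<and>
        cmp C c j = cmp C i1 (ident C B) \<and> cmp C q1 c = cmp C a q0 \<and>
        a \<in> perp_ideal C E J)"

definition special_preenveloping :: "('o,'m) addcat \<Rightarrow> ('m \<times> 'm) set \<Rightarrow> 'm set \<Rightarrow> bool" where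
  "special_preenveloping C E J \<longleftrightarrow> (\<forall>B\<in>cObj C. \<exists>j. special_preenvelope C E J B j)"

end

theory Submission
  imports Defs
begin

text \<open>
  Write the two special preenvelopes as morphisms of conflations \<open>(1, c\<^sub>k, a\<^sub>k)\<close> from
  \<open>B \<rightarrow> C\<^sub>k \<rightarrow> A\<^sub>k\<close> to \<open>B \<rightarrow> C'\<^sub>k \<rightarrow> A'\<^sub>k\<close>, with \<open>a\<^sub>k\<close> Ext-orthogonal to \<open>J\<^sub>k\<close>.
  Pushing the two conflations out against each other, the composite \<open>B \<rightarrow> C\<^sub>1 \<amalg>\<^sub>B C\<^sub>2\<close> is
  an inflation with cokernel \<open>A\<^sub>1 \<oplus> A\<^sub>2\<close>; doing the same with the targets, the universal
  properties yield a morphism of conflations whose third component is \<open>a\<^sub>1 \<oplus> a\<^sub>2\<close>.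
  The composite factors through \<open>m\<^sub>1\<close> and through \<open>m\<^sub>2\<close>, so it lies in both ideals.
  Finally, \<open>Ext(a, f) = 0\<close> means that \<open>a\<close> lifts through the deflation of every conflation
  pushed out along \<open>f\<close>; on a biproduct such lifts can be chosen summand by summand, so
  \<open>a\<^sub>1 \<oplus> a\<^sub>2\<close> is Ext-orthogonal to \<open>J\<^sub>1 \<inter> J\<^sub>2\<close>.
\<close>

lemma ideal_comp_left:
  "ideal C J \<Longrightarrow> f \<in> J \<Longrightarrow> g \<in> cMor C \<Longrightarrow> tgt C f = src C g \<Longrightarrow> cmp C g f \<in> J"
  unfolding ideal_def by blast

lemma ideal_Int: "ideal C J1 \<Longrightarrow> ideal C J2 \<Longrightarrow> ideal C (J1 \<inter> J2)"
  unfolding ideal_def Ball_def Int_iff subset_iff by meson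

section \<open>Preadditive categories\<close>

locale preadditive_cat =
  fixes C :: "('o,'m) addcat"
  assumes preadditive: "preadditive C"
begin

abbreviation comp (infixr "\<cdot>" 70) where "g \<cdot> f \<equiv> cmp C g f"
abbreviation plus (infixl "\<oplus>" 65) where "f \<oplus> g \<equiv> madd C f g"
abbreviation zero ("\<zero>\<^bsub>_,_\<^esub>") where "\<zero>\<^bsub>A,B\<^esub> \<equiv> mzero C A B"

lemma category: "category C"
  using preadditive unfolding preadditive_def by blast

lemma hom_mor: "f \<in> Hom C A B \<Longrightarrow> f \<in> cMor C"
  and hom_src: "f \<in> Hom C A B \<Longrightarrow> src C f = A"
  and hom_tgt: "f \<in> Hom C A B \<Longrightarrow> tgt C f = B"
  by (simp_all add: Hom_def)

lemma hom_obj: "f \<in> Hom C A B \<Longrightarrow> A \<in> cObj C \<and> B \<in> cObj C"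
  using category unfolding category_def Hom_def by auto

lemma comp_hom [intro]: "f \<in> Hom C A B \<Longrightarrow> g \<in> Hom C B D \<Longrightarrow> g \<cdot> f \<in> Hom C A D"
  using category unfolding category_def Hom_def by auto

lemma ident_hom [intro]: "A \<in> cObj C \<Longrightarrow> ident C A \<in> Hom C A A"
  using category unfolding category_def by auto

lemma ident_comp [simp]: "f \<in> Hom C A B \<Longrightarrow> ident C B \<cdot> f = f"
  and comp_ident [simp]: "f \<in> Hom C A B \<Longrightarrow> f \<cdot> ident C A = f"
  using category unfolding category_def Hom_def by auto

lemma comp_assoc:
  "f \<in> Hom C A B \<Longrightarrow> g \<in> Hom C B D \<Longrightarrow> h \<in> Hom C D F \<Longrightarrow> h \<cdot> (g \<cdot> f) = (h \<cdot> g) \<cdot> f"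
  using category unfolding category_def Hom_def by auto

lemma hom_group:
  assumes "f \<in> Hom C A B"
  shows neg_hom [intro]: "mneg C f \<in> Hom C A B"
    and plus_zero [simp]: "f \<oplus> \<zero>\<^bsub>A,B\<^esub> = f"
    and plus_neg [simp]: "f \<oplus> mneg C f = \<zero>\<^bsub>A,B\<^esub>"
    and plus_hom [intro]: "g \<in> Hom C A B \<Longrightarrow> f \<oplus> g \<in> Hom C A B"
    and plus_commute: "g \<in> Hom C A B \<Longrightarrow> f \<oplus> g = g \<oplus> f"
    and plus_assoc: "g \<in> Hom C A B \<Longrightarrow> h \<in> Hom C A B \<Longrightarrow> f \<oplus> g \<oplus> h = f \<oplus> (g \<oplus> h)"
  using preadditive hom_obj[OF assms(1)] assms unfolding preadditive_def by meson+

lemma zero_hom [intro]: "A \<in> cObj C \<Longrightarrow> B \<in> cObj C \<Longrightarrow> \<zero>\<^bsub>A,B\<^esub> \<in> Hom C A B"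
  using preadditive unfolding preadditive_def by blast

lemma comp_plus: "f \<in> Hom C A B \<Longrightarrow> g \<in> Hom C A B \<Longrightarrow> h \<in> Hom C B D \<Longrightarrow>
    h \<cdot> (f \<oplus> g) = h \<cdot> f \<oplus> h \<cdot> g"
  and plus_comp: "f \<in> Hom C A B \<Longrightarrow> g \<in> Hom C A B \<Longrightarrow> k \<in> Hom C D A \<Longrightarrow>
    (f \<oplus> g) \<cdot> k = f \<cdot> k \<oplus> g \<cdot> k"
  using preadditive unfolding preadditive_def Hom_def by auto

lemma zero_plus [simp]: "f \<in> Hom C A B \<Longrightarrow> \<zero>\<^bsub>A,B\<^esub> \<oplus> f = f"
  using plus_commute[of f A B "\<zero>\<^bsub>A,B\<^esub>"] hom_obj[of f A B] zero_hom[of A B] by auto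

lemma idempotent_hom_eq_zero:
  assumes "z \<in> Hom C A B" "z \<oplus> z = z"
  shows "z = \<zero>\<^bsub>A,B\<^esub>"
proof -
  have "z = z \<oplus> (z \<oplus> mneg C z)"
    using assms(1) by simp
  also have "\<dots> = z \<oplus> mneg C z"
    using plus_assoc[OF assms(1) assms(1) neg_hom[OF assms(1)]] assms(2) by simp
  finally show ?thesis
    using assms(1) by simp
qed

lemma zero_comp [simp]:
  assumes "f \<in> Hom C A B" "D \<in> cObj C"
  shows "\<zero>\<^bsub>B,D\<^esub> \<cdot> f = \<zero>\<^bsub>A,D\<^esub>"
proof (rule idempotent_hom_eq_zero)
  have z: "\<zero>\<^bsub>B,D\<^esub> \<in> Hom C B D"
    using hom_obj[OF assms(1)] assms(2) by blast
  then show "\<zero>\<^bsub>B,D\<^esub> \<cdot> f \<in> Hom C A D"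
    using assms(1) by blast
  show "\<zero>\<^bsub>B,D\<^esub> \<cdot> f \<oplus> \<zero>\<^bsub>B,D\<^esub> \<cdot> f = \<zero>\<^bsub>B,D\<^esub> \<cdot> f"
    using plus_comp[OF z z assms(1)] z by simp
qed

lemma comp_zero [simp]:
  assumes "g \<in> Hom C B D" "A \<in> cObj C"
  shows "g \<cdot> \<zero>\<^bsub>A,B\<^esub> = \<zero>\<^bsub>A,D\<^esub>"
proof (rule idempotent_hom_eq_zero)
  have z: "\<zero>\<^bsub>A,B\<^esub> \<in> Hom C A B"
    using hom_obj[OF assms(1)] assms(2) by blast
  then show "g \<cdot> \<zero>\<^bsub>A,B\<^esub> \<in> Hom C A D"
    using assms(1) by blast
  show "g \<cdot> \<zero>\<^bsub>A,B\<^esub> \<oplus> g \<cdot> \<zero>\<^bsub>A,B\<^esub> = g \<cdot> \<zero>\<^bsub>A,B\<^esub>"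
    using comp_plus[OF z z assms(1)] z by simp
qed

lemma neg_unique:
  assumes "f \<in> Hom C A B" "g \<in> Hom C A B" "f \<oplus> g = \<zero>\<^bsub>A,B\<^esub>"
  shows "g = mneg C f"
proof -
  have "g = g \<oplus> (f \<oplus> mneg C f)"
    using assms(1,2) by simp
  also have "\<dots> = (f \<oplus> g) \<oplus> mneg C f"
    using plus_assoc[OF assms(2,1) neg_hom[OF assms(1)]] plus_commute[OF assms(1,2)] by simp
  finally show ?thesis
    using assms(3) neg_hom[OF assms(1)] by simp
qed

lemma comp_neg:
  assumes "f \<in> Hom C A B" "h \<in> Hom C B D"
  shows "h \<cdot> mneg C f = mneg C (h \<cdot> f)"
proof (rule neg_unique)
  show "h \<cdot> f \<oplus> h \<cdot> mneg C f = \<zero>\<^bsub>A,D\<^esub>"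
    using comp_plus[OF assms(1) neg_hom[OF assms(1)] assms(2)] hom_obj[OF assms(1)] assms by simp
qed (use assms in blast)+

lemma neg_comp:
  assumes "f \<in> Hom C A B" "k \<in> Hom C D A"
  shows "mneg C f \<cdot> k = mneg C (f \<cdot> k)"
proof (rule neg_unique)
  show "f \<cdot> k \<oplus> mneg C f \<cdot> k = \<zero>\<^bsub>D,B\<^esub>"
    using plus_comp[OF assms(1) neg_hom[OF assms(1)] assms(2)] hom_obj[OF assms(1)] assms by simp
qed (use assms in blast)+

lemma neg_zero [simp]: "A \<in> cObj C \<Longrightarrow> B \<in> cObj C \<Longrightarrow> mneg C \<zero>\<^bsub>A,B\<^esub> = \<zero>\<^bsub>A,B\<^esub>"
  using neg_unique[of "\<zero>\<^bsub>A,B\<^esub>" A B "\<zero>\<^bsub>A,B\<^esub>"] zero_hom[of A B] by auto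

lemma isoI:
  "f \<in> Hom C A B \<Longrightarrow> g \<in> Hom C B A \<Longrightarrow> g \<cdot> f = ident C A \<Longrightarrow> f \<cdot> g = ident C B \<Longrightarrow> iso C f"
  unfolding iso_def Hom_def by auto

lemma iso_ident: "A \<in> cObj C \<Longrightarrow> iso C (ident C A)"
  by (meson ident_comp ident_hom isoI)

lemma pushout_square:
  assumes "is_pushout C f g u v"
  shows "f \<in> Hom C (src C f) (tgt C f)" "g \<in> Hom C (src C f) (tgt C g)"
    "u \<in> Hom C (tgt C f) (tgt C u)" "v \<in> Hom C (tgt C g) (tgt C u)" "u \<cdot> f = v \<cdot> g"
  using assms unfolding is_pushout_def Hom_def by simp_all

lemma pushout_sym: "is_pushout C f g u v \<Longrightarrow> is_pushout C g f v u"
  unfolding is_pushout_def by (elim conjE) (intro conjI; (assumption | metis))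

lemma pushout_univ:
  assumes po: "is_pushout C f g u v"
    and y: "y \<in> Hom C (tgt C f) T" and z: "z \<in> Hom C (tgt C g) T" and yz: "y \<cdot> f = z \<cdot> g"
  shows "\<exists>!h. h \<in> Hom C (tgt C u) T \<and> h \<cdot> u = y \<and> h \<cdot> v = z"
proof -
  have "\<forall>y\<in>cMor C. \<forall>z\<in>cMor C. src C y = tgt C f \<and> src C z = tgt C g \<and> tgt C y = tgt C z \<and>
      y \<cdot> f = z \<cdot> g \<longrightarrow> (\<exists>!h. h \<in> Hom C (tgt C u) (tgt C y) \<and> h \<cdot> u = y \<and> h \<cdot> v = z)"
    using po unfolding is_pushout_def by (elim conjE) assumption
  from this[rule_format, of y z] show ?thesis
    using y z yz by (simp add: Hom_def)
qed

lemma pushout_factor: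
  "is_pushout C f g u v \<Longrightarrow> y \<in> Hom C (tgt C f) T \<Longrightarrow> z \<in> Hom C (tgt C g) T \<Longrightarrow>
    y \<cdot> f = z \<cdot> g \<Longrightarrow> \<exists>h \<in> Hom C (tgt C u) T. h \<cdot> u = y \<and> h \<cdot> v = z"
  by (drule (3) pushout_univ) blast

lemma pushout_hom_eqI:
  assumes po: "is_pushout C f g u v" and h: "h \<in> Hom C (tgt C u) T" "h' \<in> Hom C (tgt C u) T"
    and "h \<cdot> u = h' \<cdot> u" "h \<cdot> v = h' \<cdot> v"
  shows "h = h'"
proof -
  note sq = pushout_square[OF po]
  have "(h \<cdot> u) \<cdot> f = (h \<cdot> v) \<cdot> g"
    using comp_assoc[OF sq(1,3) h(1)] comp_assoc[OF sq(2,4) h(1)] sq(5) by simp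
  then have "\<exists>!k. k \<in> Hom C (tgt C u) T \<and> k \<cdot> u = h \<cdot> u \<and> k \<cdot> v = h \<cdot> v"
    using pushout_univ[OF po] sq h by blast
  then show ?thesis
    using assms by metis
qed

lemma pullback_square:
  assumes "is_pullback C d q p a"
  shows "d \<in> Hom C (src C d) (tgt C d)" "q \<in> Hom C (src C d) (tgt C q)"
    "p \<in> Hom C (tgt C d) (tgt C p)" "a \<in> Hom C (tgt C q) (tgt C p)" "p \<cdot> d = a \<cdot> q"
  using assms unfolding is_pullback_def Hom_def by simp_all

lemma pullback_univ:
  assumes pb: "is_pullback C d q p a"
    and y: "y \<in> Hom C X (tgt C d)" and z: "z \<in> Hom C X (tgt C q)" and yz: "p \<cdot> y = a \<cdot> z"
  shows "\<exists>!h. h \<in> Hom C X (src C d) \<and> d \<cdot> h = y \<and> q \<cdot> h = z"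
proof -
  have "\<forall>y\<in>cMor C. \<forall>z\<in>cMor C. tgt C y = src C p \<and> tgt C z = src C a \<and> src C y = src C z \<and>
      p \<cdot> y = a \<cdot> z \<longrightarrow> (\<exists>!h. h \<in> Hom C (src C y) (src C d) \<and> d \<cdot> h = y \<and> q \<cdot> h = z)"
    using pb unfolding is_pullback_def by (elim conjE) assumption
  from this[rule_format, of y z] show ?thesis
    using y z yz pullback_square[OF pb] by (simp add: Hom_def)
qed

lemma pullback_factor:
  "is_pullback C d q p a \<Longrightarrow> y \<in> Hom C X (tgt C d) \<Longrightarrow> z \<in> Hom C X (tgt C q) \<Longrightarrow>
    p \<cdot> y = a \<cdot> z \<Longrightarrow> \<exists>h \<in> Hom C X (src C d). d \<cdot> h = y \<and> q \<cdot> h = z"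
  by (drule (3) pullback_univ) blast

lemma pullback_hom_eqI:
  assumes pb: "is_pullback C d q p a" and h: "h \<in> Hom C X (src C d)" "h' \<in> Hom C X (src C d)"
    and "d \<cdot> h = d \<cdot> h'" "q \<cdot> h = q \<cdot> h'"
  shows "h = h'"
proof -
  note sq = pullback_square[OF pb]
  have "p \<cdot> (d \<cdot> h) = a \<cdot> (q \<cdot> h)"
    using comp_assoc[OF h(1) sq(1,3)] comp_assoc[OF h(1) sq(2,4)] sq(5) by simp
  then have "\<exists>!k. k \<in> Hom C X (src C d) \<and> d \<cdot> k = d \<cdot> h \<and> q \<cdot> k = q \<cdot> h"
    using pullback_univ[OF pb] sq h by blast
  then show ?thesis
    using assms by metis
qed

definition biproduct :: "'o \<Rightarrow> 'o \<Rightarrow> 'o \<Rightarrow> 'm \<Rightarrow> 'm \<Rightarrow> 'm \<Rightarrow> 'm \<Rightarrow> bool" where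
  "biproduct S A1 A2 j1 j2 r1 r2 \<longleftrightarrow> S \<in> cObj C \<and>
     j1 \<in> Hom C A1 S \<and> j2 \<in> Hom C A2 S \<and> r1 \<in> Hom C S A1 \<and> r2 \<in> Hom C S A2 \<and>
     r1 \<cdot> j1 = ident C A1 \<and> r2 \<cdot> j2 = ident C A2 \<and> r2 \<cdot> j1 = \<zero>\<^bsub>A1,A2\<^esub> \<and> r1 \<cdot> j2 = \<zero>\<^bsub>A2,A1\<^esub> \<and>
     j1 \<cdot> r1 \<oplus> j2 \<cdot> r2 = ident C S"

lemma biproduct_hom_ext:
  assumes bp: "biproduct S A1 A2 j1 j2 r1 r2" and x: "x \<in> Hom C S T" and y: "y \<in> Hom C S T"
    and eq1: "x \<cdot> j1 = y \<cdot> j1" and eq2: "x \<cdot> j2 = y \<cdot> j2"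
  shows "x = y"
proof -
  have j: "j1 \<in> Hom C A1 S" "j2 \<in> Hom C A2 S" and r: "r1 \<in> Hom C S A1" "r2 \<in> Hom C S A2"
    and id: "j1 \<cdot> r1 \<oplus> j2 \<cdot> r2 = ident C S"
    using bp unfolding biproduct_def by blast+
  have expand: "z \<cdot> ident C S = (z \<cdot> j1) \<cdot> r1 \<oplus> (z \<cdot> j2) \<cdot> r2" if "z \<in> Hom C S T" for z
    using comp_plus[OF comp_hom[OF r(1) j(1)] comp_hom[OF r(2) j(2)] that] id
      comp_assoc[OF r(1) j(1) that] comp_assoc[OF r(2) j(2) that] by simp
  show ?thesis
    using expand[OF x] expand[OF y] eq1 eq2 x y by simp
qed

lemma biproduct_copair:
  assumes bp: "biproduct S A1 A2 j1 j2 r1 r2" and g1: "g1 \<in> Hom C A1 T" and g2: "g2 \<in> Hom C A2 T"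
  shows "g1 \<cdot> r1 \<oplus> g2 \<cdot> r2 \<in> Hom C S T"
    and "(g1 \<cdot> r1 \<oplus> g2 \<cdot> r2) \<cdot> j1 = g1" and "(g1 \<cdot> r1 \<oplus> g2 \<cdot> r2) \<cdot> j2 = g2"
proof -
  have j: "j1 \<in> Hom C A1 S" "j2 \<in> Hom C A2 S" and r: "r1 \<in> Hom C S A1" "r2 \<in> Hom C S A2"
    and rj: "r1 \<cdot> j1 = ident C A1" "r2 \<cdot> j2 = ident C A2" "r2 \<cdot> j1 = \<zero>\<^bsub>A1,A2\<^esub>" "r1 \<cdot> j2 = \<zero>\<^bsub>A2,A1\<^esub>"
    using bp unfolding biproduct_def by blast+
  have ob: "A1 \<in> cObj C" "A2 \<in> cObj C"
    using hom_obj[OF g1] hom_obj[OF g2] by auto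
  have gr: "g1 \<cdot> r1 \<in> Hom C S T" "g2 \<cdot> r2 \<in> Hom C S T"
    using r g1 g2 by blast+
  then show "g1 \<cdot> r1 \<oplus> g2 \<cdot> r2 \<in> Hom C S T"
    by blast
  show "(g1 \<cdot> r1 \<oplus> g2 \<cdot> r2) \<cdot> j1 = g1"
    using plus_comp[OF gr j(1)] comp_assoc[OF j(1) r(1) g1, symmetric]
      comp_assoc[OF j(1) r(2) g2, symmetric] rj g1 g2 ob
    by simp
  show "(g1 \<cdot> r1 \<oplus> g2 \<cdot> r2) \<cdot> j2 = g2"
    using plus_comp[OF gr j(2)] comp_assoc[OF j(2) r(1) g1, symmetric]
      comp_assoc[OF j(2) r(2) g2, symmetric] rj g1 g2 ob
    by simp
qed

end

locale exact_cat = preadditive_cat C for C :: "('o,'m) addcat" +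
  fixes E :: "('m \<times> 'm) set"
  assumes exact: "exact_category C E"
begin

lemma additive: "additive C"
  using exact unfolding exact_category_def by blast

lemma biproduct_exists:
  assumes "A1 \<in> cObj C" "A2 \<in> cObj C"
  shows "\<exists>S j1 j2 r1 r2. biproduct S A1 A2 j1 j2 r1 r2"
  using additive assms unfolding additive_def biproduct_def by blast

lemma conflation_kc_pair: "(i, p) \<in> E \<Longrightarrow> kc_pair C i p"
  using exact unfolding exact_category_def by blast

lemma inflation_hom: "(i, p) \<in> E \<Longrightarrow> i \<in> Hom C (src C i) (tgt C i)"
  and deflation_hom: "(i, p) \<in> E \<Longrightarrow> p \<in> Hom C (tgt C i) (tgt C p)"
  and deflation_comp_inflation: "(i, p) \<in> E \<Longrightarrow> p \<cdot> i = \<zero>\<^bsub>src C i,tgt C p\<^esub>"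
  using conflation_kc_pair unfolding kc_pair_def is_kernel_def Hom_def by auto

lemma inflation_univ:
  assumes "(i, p) \<in> E" "f \<in> Hom C X (tgt C i)" "p \<cdot> f = \<zero>\<^bsub>X,tgt C p\<^esub>"
  shows "\<exists>!g. g \<in> Hom C X (src C i) \<and> i \<cdot> g = f"
proof -
  have "is_kernel C i p"
    using conflation_kc_pair[OF assms(1)] unfolding kc_pair_def by blast
  then have "\<forall>f\<in>cMor C. tgt C f = src C p \<and> p \<cdot> f = \<zero>\<^bsub>src C f,tgt C p\<^esub> \<longrightarrow>
      (\<exists>!g. g \<in> Hom C (src C f) (src C i) \<and> i \<cdot> g = f)"
    unfolding is_kernel_def by blast
  from this[rule_format, of f] show ?thesis
    using assms deflation_hom[OF assms(1)] by (simp add: Hom_def)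
qed

lemma deflation_univ:
  assumes "(i, p) \<in> E" "f \<in> Hom C (tgt C i) Y" "f \<cdot> i = \<zero>\<^bsub>src C i,Y\<^esub>"
  shows "\<exists>!g. g \<in> Hom C (tgt C p) Y \<and> g \<cdot> p = f"
proof -
  have "is_cokernel C p i"
    using conflation_kc_pair[OF assms(1)] unfolding kc_pair_def by blast
  then have "\<forall>f\<in>cMor C. src C f = tgt C i \<and> f \<cdot> i = \<zero>\<^bsub>src C i,tgt C f\<^esub> \<longrightarrow>
      (\<exists>!g. g \<in> Hom C (tgt C p) (tgt C f) \<and> g \<cdot> p = f)"
    unfolding is_cokernel_def by blast
  from this[rule_format, of f] show ?thesis
    using assms by (simp add: Hom_def)
qed

lemma inflation_factor:
  "(i, p) \<in> E \<Longrightarrow> f \<in> Hom C X (tgt C i) \<Longrightarrow> p \<cdot> f = \<zero>\<^bsub>X,tgt C p\<^esub> \<Longrightarrow>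
    \<exists>g \<in> Hom C X (src C i). i \<cdot> g = f"
  by (drule (2) inflation_univ) blast

lemma deflation_factor:
  "(i, p) \<in> E \<Longrightarrow> f \<in> Hom C (tgt C i) Y \<Longrightarrow> f \<cdot> i = \<zero>\<^bsub>src C i,Y\<^esub> \<Longrightarrow>
    \<exists>g \<in> Hom C (tgt C p) Y. g \<cdot> p = f"
  by (drule (2) deflation_univ) blast

lemma inflation_cancel:
  assumes ip: "(i, p) \<in> E" and g: "g \<in> Hom C X (src C i)" and h: "h \<in> Hom C X (src C i)"
    and eq: "i \<cdot> g = i \<cdot> h"
  shows "g = h"
proof -
  have "p \<cdot> (i \<cdot> g) = \<zero>\<^bsub>X,tgt C p\<^esub>"
    using comp_assoc[OF g inflation_hom[OF ip] deflation_hom[OF ip]] deflation_comp_inflation[OF ip]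
      g hom_obj[OF deflation_hom[OF ip]] by simp
  then have "\<exists>!g'. g' \<in> Hom C X (src C i) \<and> i \<cdot> g' = i \<cdot> g"
    using inflation_univ[OF ip] g inflation_hom[OF ip] by blast
  then show ?thesis
    using g h eq by (metis (no_types, lifting))
qed

lemma deflation_cancel:
  assumes ip: "(i, p) \<in> E" and g: "g \<in> Hom C (tgt C p) Y" and h: "h \<in> Hom C (tgt C p) Y"
    and eq: "g \<cdot> p = h \<cdot> p"
  shows "g = h"
proof -
  have "(g \<cdot> p) \<cdot> i = \<zero>\<^bsub>src C i,Y\<^esub>"
    using comp_assoc[OF inflation_hom[OF ip] deflation_hom[OF ip] g] deflation_comp_inflation[OF ip]
      g hom_obj[OF inflation_hom[OF ip]] by simp
  then have "\<exists>!g'. g' \<in> Hom C (tgt C p) Y \<and> g' \<cdot> p = g \<cdot> p"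
    using deflation_univ[OF ip] g deflation_hom[OF ip] by blast
  then show ?thesis
    using g h eq by (metis (no_types, lifting))
qed

lemma conflation_iso_closed:
  assumes "(i, p) \<in> E" "i' \<in> Hom C A' B'" "p' \<in> Hom C B' D'"
    "f \<in> Hom C A' (src C i)" "g \<in> Hom C B' (tgt C i)" "h \<in> Hom C D' (tgt C p)"
    "iso C f" "iso C g" "iso C h" "g \<cdot> i' = i \<cdot> f" "h \<cdot> p' = p \<cdot> g"
  shows "(i', p') \<in> E"
proof -
  have "\<forall>i' p' f g h. i' \<in> cMor C \<and> p' \<in> cMor C \<and> tgt C i' = src C p' \<and>
      f \<in> Hom C (src C i') (src C i) \<and> g \<in> Hom C (tgt C i') (tgt C i) \<and>
      h \<in> Hom C (tgt C p') (tgt C p) \<and> iso C f \<and> iso C g \<and> iso C h \<and>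
      g \<cdot> i' = i \<cdot> f \<and> h \<cdot> p' = p \<cdot> g \<longrightarrow> (i', p') \<in> E"
    using exact assms(1) unfolding exact_category_def by blast
  from this[rule_format, of i' p' f g h] show ?thesis
    using assms by (simp add: Hom_def)
qed

lemma inflation_comp:
  "inflation E i \<Longrightarrow> inflation E j \<Longrightarrow> tgt C i = src C j \<Longrightarrow> inflation E (j \<cdot> i)"
  using exact unfolding exact_category_def by blast

lemma pushout_inflation_exists:
  "inflation E i \<Longrightarrow> f \<in> Hom C (src C i) Y \<Longrightarrow> \<exists>u v. is_pushout C i f u v \<and> inflation E v"
  using exact unfolding exact_category_def Hom_def by blast

lemma pullback_deflation_exists:
  "deflation E p \<Longrightarrow> a \<in> Hom C X (tgt C p) \<Longrightarrow> \<exists>d q. is_pullback C d q p a \<and> deflation E q"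
  using exact unfolding exact_category_def Hom_def by blast

lemma conflation_change_deflation:
  assumes conf: "(i, s) \<in> E" and q: "q \<in> Hom C (tgt C i) X"
    and h: "h \<in> Hom C X (tgt C s)" and k: "k \<in> Hom C (tgt C s) X"
    and hq: "h \<cdot> q = s" and ks: "k \<cdot> s = q" and kh: "k \<cdot> h = ident C X"
  shows "(i, q) \<in> E"
proof -
  note i = inflation_hom[OF conf] and s = deflation_hom[OF conf]
  have "(h \<cdot> k) \<cdot> s = ident C (tgt C s) \<cdot> s"
    using comp_assoc[OF s k h] ks hq s by simp
  then have "h \<cdot> k = ident C (tgt C s)"
    using deflation_cancel[OF conf] h k hom_obj[OF h] by blast
  then have "iso C h"
    using isoI[OF h k kh] by blast
  moreover have "src C i \<in> cObj C" "tgt C i \<in> cObj C"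
    using hom_obj[OF i] by auto
  ultimately show ?thesis
    using conflation_iso_closed[OF conf i q ident_hom ident_hom h iso_ident iso_ident] hq q i s
    by simp
qed

lemma conflation_change_inflation:
  assumes iq: "(i, q) \<in> E" and w: "w \<in> Hom C A (tgt C i)"
    and k: "k \<in> Hom C A (src C i)" and g: "g \<in> Hom C (src C i) A"
    and ik: "i \<cdot> k = w" and wg: "w \<cdot> g = i" and gk: "g \<cdot> k = ident C A"
  shows "(w, q) \<in> E"
proof -
  note i = inflation_hom[OF iq] and q = deflation_hom[OF iq]
  have "i \<cdot> (k \<cdot> g) = i \<cdot> ident C (src C i)"
    using comp_assoc[OF g k i] ik wg i by simp
  then have "k \<cdot> g = ident C (src C i)"
    using inflation_cancel[OF iq] g k hom_obj[OF g] by blast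
  then have "iso C k"
    using isoI[OF k g gk] by blast
  moreover have "tgt C i \<in> cObj C" "tgt C q \<in> cObj C"
    using hom_obj[OF q] by auto
  ultimately show ?thesis
    using conflation_iso_closed[OF iq w q k ident_hom ident_hom _ iso_ident iso_ident] ik w q
    by simp
qed

lemma conflation_change_middle:
  assumes ip: "(i, p) \<in> E" and i': "i' \<in> Hom C (src C i) T"
    and \<phi>: "\<phi> \<in> Hom C T (tgt C i)" "iso C \<phi>" and \<phi>i': "\<phi> \<cdot> i' = i"
  shows "(i', p \<cdot> \<phi>) \<in> E"
proof -
  note i = inflation_hom[OF ip] and p = deflation_hom[OF ip]
  have "src C i \<in> cObj C" "tgt C p \<in> cObj C"
    using hom_obj[OF i] hom_obj[OF p] by auto
  then show ?thesis
    using conflation_iso_closed[OF ip i' comp_hom[OF \<phi>(1) p] ident_hom \<phi>(1) ident_hom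
        iso_ident \<phi>(2) iso_ident] \<phi>i' i ident_comp[OF comp_hom[OF \<phi>(1) p]]
    by simp
qed

text \<open>A section \<open>s\<close> of \<open>p\<close> gives the retraction of \<open>m\<close> as the factorisation of \<open>1 - s p\<close>
  through the kernel \<open>m\<close> of \<open>p\<close>; dually for the converse.\<close>

lemma split_conflI:
  assumes mp: "(m, p) \<in> E" and s: "s \<in> Hom C (tgt C p) (tgt C m)"
    and ps: "p \<cdot> s = ident C (tgt C p)"
  shows "split_confl C m p"
proof -
  define A T D where "A = src C m" and "T = tgt C m" and "D = tgt C p"
  have m: "m \<in> Hom C A T" and p: "p \<in> Hom C T D" and s: "s \<in> Hom C D T"
    using inflation_hom[OF mp] deflation_hom[OF mp] s unfolding A_def T_def D_def by simp_all
  have ob: "A \<in> cObj C" "T \<in> cObj C" "D \<in> cObj C"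
    using hom_obj[OF m] hom_obj[OF p] by auto
  have sp: "s \<cdot> p \<in> Hom C T T"
    using p s by blast
  define f where "f = ident C T \<oplus> mneg C (s \<cdot> p)"
  have f: "f \<in> Hom C T T"
    unfolding f_def using ob sp by blast
  have "p \<cdot> f = p \<oplus> mneg C ((p \<cdot> s) \<cdot> p)"
    unfolding f_def
    using comp_plus[OF ident_hom[OF ob(2)] neg_hom[OF sp] p] comp_neg[OF sp p] comp_assoc[OF p s p]
      ob p by simp
  also have "\<dots> = \<zero>\<^bsub>T,D\<^esub>"
    using ps p unfolding D_def by simp
  finally obtain r where r: "r \<in> Hom C T A" and mr: "m \<cdot> r = f"
    using inflation_factor[OF mp, of f T] f unfolding A_def T_def D_def by blast
  have "m \<cdot> (r \<cdot> m) = m \<oplus> mneg C (s \<cdot> (p \<cdot> m))"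
    unfolding comp_assoc[OF m r m] mr f_def
    using plus_comp[OF ident_hom[OF ob(2)] neg_hom[OF sp] m] neg_comp[OF sp m] comp_assoc[OF m p s]
      ob m by simp
  also have "\<dots> = m \<cdot> ident C A"
    using deflation_comp_inflation[OF mp] m s ob unfolding A_def D_def by simp
  finally have "r \<cdot> m = ident C A"
    using inflation_cancel[OF mp] r m ob unfolding A_def by blast
  then show ?thesis
    unfolding split_confl_def using r unfolding A_def T_def by blast
qed

lemma split_confl_section:
  assumes mp: "(m, p) \<in> E" and split: "split_confl C m p"
  shows "\<exists>s \<in> Hom C (tgt C p) (tgt C m). p \<cdot> s = ident C (tgt C p)"
proof -
  define A T D where "A = src C m" and "T = tgt C m" and "D = tgt C p"
  have m: "m \<in> Hom C A T" and p: "p \<in> Hom C T D"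
    using inflation_hom[OF mp] deflation_hom[OF mp] unfolding A_def T_def D_def by simp_all
  have ob: "A \<in> cObj C" "T \<in> cObj C" "D \<in> cObj C"
    using hom_obj[OF m] hom_obj[OF p] by auto
  obtain r where r: "r \<in> Hom C T A" and rm: "r \<cdot> m = ident C A"
    using split unfolding split_confl_def A_def T_def by blast
  have mr: "m \<cdot> r \<in> Hom C T T"
    using m r by blast
  define g where "g = ident C T \<oplus> mneg C (m \<cdot> r)"
  have g: "g \<in> Hom C T T"
    unfolding g_def using ob mr by blast
  have "g \<cdot> m = m \<oplus> mneg C (m \<cdot> (r \<cdot> m))"
    unfolding g_def
    using plus_comp[OF ident_hom[OF ob(2)] neg_hom[OF mr] m] neg_comp[OF mr m] comp_assoc[OF m r m]
      ob m by simp
  also have "\<dots> = \<zero>\<^bsub>A,T\<^esub>"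
    using rm m by simp
  finally obtain s where s: "s \<in> Hom C D T" and sp: "s \<cdot> p = g"
    using deflation_factor[OF mp, of g T] g unfolding A_def T_def D_def by blast
  have "(p \<cdot> s) \<cdot> p = p \<oplus> mneg C ((p \<cdot> m) \<cdot> r)"
    unfolding comp_assoc[OF p s p, symmetric] sp g_def
    using comp_plus[OF ident_hom[OF ob(2)] neg_hom[OF mr] p] comp_neg[OF mr p] comp_assoc[OF r m p]
      ob p by simp
  also have "\<dots> = ident C D \<cdot> p"
    using deflation_comp_inflation[OF mp] p r ob unfolding A_def D_def by simp
  finally have "p \<cdot> s = ident C D"
    using deflation_cancel[OF mp] s p ob unfolding D_def by blast
  then show ?thesis
    using s unfolding D_def T_def by blast
qed

end

section \<open>Pushing out and pulling back conflations\<close>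

context exact_cat
begin

lemma conflation_pullback_kernel:
  assumes mp: "(m, p) \<in> E" and pb: "is_pullback C d q p a" and iq: "(i, q) \<in> E"
    and w: "w \<in> Hom C (src C m) (src C d)" and dw: "d \<cdot> w = m"
    and qw: "q \<cdot> w = \<zero>\<^bsub>src C m,tgt C q\<^esub>"
  shows "(w, q) \<in> E"
proof -
  define A K W X where "A = src C m" and "K = src C i" and "W = src C d" and "X = tgt C q"
  note sq = pullback_square[OF pb]
  have m: "m \<in> Hom C A (tgt C m)" and p: "p \<in> Hom C (tgt C m) (tgt C p)"
    using inflation_hom[OF mp] deflation_hom[OF mp] unfolding A_def by simp_all
  have d: "d \<in> Hom C W (tgt C m)" and q: "q \<in> Hom C W X" and a: "a \<in> Hom C X (tgt C p)"
    using sq hom_src[OF sq(3)] hom_src[OF p] unfolding W_def X_def by simp_all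
  have i: "i \<in> Hom C K W"
    using inflation_hom[OF iq] hom_src[OF deflation_hom[OF iq]] hom_src[OF q] unfolding K_def
    by simp
  have qi: "q \<cdot> i = \<zero>\<^bsub>K,X\<^esub>"
    using deflation_comp_inflation[OF iq] unfolding K_def X_def by simp
  have ob: "A \<in> cObj C" "X \<in> cObj C"
    using hom_obj[OF m] hom_obj[OF a] by auto
  have w: "w \<in> Hom C A W"
    using w unfolding A_def W_def .
  obtain k where k: "k \<in> Hom C A K" and ik: "i \<cdot> k = w"
    using inflation_factor[OF iq, of w A] w qw hom_tgt[OF i] unfolding A_def K_def W_def X_def
    by auto
  have "p \<cdot> (d \<cdot> i) = \<zero>\<^bsub>K,tgt C p\<^esub>"
    using comp_assoc[OF i d p] comp_assoc[OF i q a] sq(5) qi a hom_obj[OF i] by simp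
  then obtain g where g: "g \<in> Hom C K A" and mg: "m \<cdot> g = d \<cdot> i"
    using inflation_factor[OF mp, of "d \<cdot> i" K] comp_hom[OF i d] unfolding A_def by blast
  have "m \<cdot> (g \<cdot> k) = m \<cdot> ident C A"
    using comp_assoc[OF k g m] comp_assoc[OF k i d] mg ik dw m by simp
  then have gk: "g \<cdot> k = ident C A"
    using inflation_cancel[OF mp] comp_hom[OF k g] ident_hom[OF ob(1)] unfolding A_def by blast
  have "d \<cdot> (w \<cdot> g) = d \<cdot> i" "q \<cdot> (w \<cdot> g) = q \<cdot> i"
    using comp_assoc[OF g w d] comp_assoc[OF g w q] mg dw qw qi g ob
    unfolding A_def W_def X_def by simp_all
  then have "w \<cdot> g = i"
    using pullback_hom_eqI[OF pb] comp_hom[OF g w] i w unfolding A_def W_def by blast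
  then show ?thesis
    using conflation_change_inflation[OF iq _ _ _ ik _ gk] w k g hom_tgt[OF i]
    unfolding A_def K_def W_def by simp
qed

lemma confl_pullback_exists:
  assumes mp: "(m, p) \<in> E" and a: "a \<in> Hom C X (tgt C p)"
  shows "\<exists>m' p'. confl_pullback C E m p a m' p'"
proof -
  have m: "m \<in> Hom C (src C m) (tgt C m)"
    using inflation_hom[OF mp] .
  have ob: "src C m \<in> cObj C" "X \<in> cObj C"
    using hom_obj[OF m] hom_obj[OF a] by auto
  obtain d q where pb: "is_pullback C d q p a" and "deflation E q"
    using pullback_deflation_exists[of p a] mp a unfolding deflation_def by blast
  then obtain i where iq: "(i, q) \<in> E"
    unfolding deflation_def by blast
  note sq = pullback_square[OF pb]
  have "p \<cdot> m = a \<cdot> \<zero>\<^bsub>src C m,X\<^esub>"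
    using deflation_comp_inflation[OF mp] a ob(1) by simp
  then obtain w where w: "w \<in> Hom C (src C m) (src C d)" and dw: "d \<cdot> w = m"
    and qw: "q \<cdot> w = \<zero>\<^bsub>src C m,X\<^esub>"
    using pullback_factor[OF pb, of m "src C m" "\<zero>\<^bsub>src C m,X\<^esub>"] m ob
      hom_src[OF sq(3)] hom_src[OF deflation_hom[OF mp]] hom_src[OF sq(4)] hom_src[OF a] by auto
  have "(w, q) \<in> E"
    using conflation_pullback_kernel[OF mp pb iq w dw] qw hom_tgt[OF sq(2)] sq(4) a
      hom_src[OF sq(4)] hom_src[OF a] by simp
  moreover have "d \<in> Hom C (tgt C w) (tgt C m)"
    using sq(1) hom_tgt[OF w] hom_src[OF sq(3)] hom_src[OF deflation_hom[OF mp]] by simp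
  ultimately show ?thesis
    unfolding confl_pullback_def using pb dw hom_src[OF w] hom_src[OF sq(4), symmetric] by blast
qed

lemma conflation_pushout_cokernel:
  assumes mp: "(m, p) \<in> E" and po: "is_pushout C m b u v" and vr: "(v, r) \<in> E"
    and w: "w \<in> Hom C (tgt C u) (tgt C p)" and wu: "w \<cdot> u = p"
    and wv: "w \<cdot> v = \<zero>\<^bsub>tgt C b,tgt C p\<^esub>"
  shows "(v, w) \<in> E"
proof -
  define D P R Y where "D = tgt C p" and "P = tgt C u" and "R = tgt C r" and "Y = tgt C b"
  note sq = pushout_square[OF po]
  have m: "m \<in> Hom C (src C m) (tgt C m)" and p: "p \<in> Hom C (tgt C m) D"
    using inflation_hom[OF mp] deflation_hom[OF mp] unfolding D_def by simp_all
  have b: "b \<in> Hom C (src C m) Y" and u: "u \<in> Hom C (tgt C m) P" and v: "v \<in> Hom C Y P"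
    using sq unfolding Y_def P_def by simp_all
  have r: "r \<in> Hom C P R"
    using deflation_hom[OF vr] hom_tgt[OF v] unfolding R_def by simp
  have rv: "r \<cdot> v = \<zero>\<^bsub>Y,R\<^esub>"
    using deflation_comp_inflation[OF vr] hom_src[OF v] unfolding R_def by simp
  have ob: "D \<in> cObj C" "Y \<in> cObj C"
    using hom_obj[OF p] hom_obj[OF b] by auto
  have w: "w \<in> Hom C P D"
    using w unfolding P_def D_def .
  obtain k where k: "k \<in> Hom C R D" and kr: "k \<cdot> r = w"
    using deflation_factor[OF vr, of w D] w wv hom_src[OF v] hom_tgt[OF v]
    unfolding D_def P_def R_def Y_def by auto
  have "(r \<cdot> u) \<cdot> m = \<zero>\<^bsub>src C m,R\<^esub>"
    using comp_assoc[OF m u r] comp_assoc[OF b v r] sq(5) rv b hom_obj[OF r] by simp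
  then obtain h where h: "h \<in> Hom C D R" and hp: "h \<cdot> p = r \<cdot> u"
    using deflation_factor[OF mp, of "r \<cdot> u" R] comp_hom[OF u r] unfolding D_def by blast
  have "(k \<cdot> h) \<cdot> p = ident C D \<cdot> p"
    using comp_assoc[OF p h k] comp_assoc[OF u r k] hp kr wu p by simp
  then have kh: "k \<cdot> h = ident C D"
    using deflation_cancel[OF mp] comp_hom[OF h k] ident_hom[OF ob(1)] unfolding D_def by blast
  have "(h \<cdot> w) \<cdot> u = r \<cdot> u" "(h \<cdot> w) \<cdot> v = r \<cdot> v"
    using comp_assoc[OF u w h] comp_assoc[OF v w h] hp wu wv rv h ob w
    unfolding D_def P_def Y_def by simp_all
  then have "h \<cdot> w = r"
    using pushout_hom_eqI[OF po] comp_hom[OF w h] r w unfolding D_def P_def by blast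
  then show ?thesis
    using conflation_change_deflation[OF vr _ _ _ _ kr kh] w k h hom_tgt[OF v]
    unfolding D_def P_def R_def by simp
qed

lemma confl_pushout_exists:
  assumes mp: "(m, p) \<in> E" and b: "b \<in> Hom C (src C m) Y"
  shows "\<exists>m' p'. confl_pushout C E m p b m' p'"
proof -
  have p: "p \<in> Hom C (tgt C m) (tgt C p)"
    using deflation_hom[OF mp] .
  have ob: "tgt C p \<in> cObj C" "Y \<in> cObj C"
    using hom_obj[OF p] hom_obj[OF b] by auto
  obtain u v where po: "is_pushout C m b u v" and "inflation E v"
    using pushout_inflation_exists[of m b] mp b unfolding inflation_def by blast
  then obtain r where vr: "(v, r) \<in> E"
    unfolding inflation_def by blast
  note sq = pushout_square[OF po]
  have "p \<cdot> m = \<zero>\<^bsub>Y,tgt C p\<^esub> \<cdot> b"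
    using deflation_comp_inflation[OF mp] b ob by simp
  then obtain w where w: "w \<in> Hom C (tgt C u) (tgt C p)" and wu: "w \<cdot> u = p"
    and wv: "w \<cdot> v = \<zero>\<^bsub>Y,tgt C p\<^esub>"
    using pushout_factor[OF po, of p "tgt C p" "\<zero>\<^bsub>Y,tgt C p\<^esub>"] p ob hom_tgt[OF b] by auto
  have "(v, w) \<in> E"
    using conflation_pushout_cokernel[OF mp po vr w wu] wv hom_tgt[OF b] by simp
  moreover have "u \<in> Hom C (tgt C m) (tgt C v)"
    using sq(3) hom_tgt[OF sq(4)] by simp
  ultimately show ?thesis
    unfolding confl_pushout_def using po wu hom_src[OF sq(4)] hom_tgt[OF b] hom_tgt[OF w]
    by blast
qed

text \<open>Axiom [E2] provides one pushout of an inflation that is again an inflation; any other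
  pushout is isomorphic to it.\<close>

lemma pushout_inflation:
  assumes mq: "(m, q) \<in> E" and po: "is_pushout C m g u v"
  shows "inflation E v"
proof -
  note sq = pushout_square[OF po]
  obtain u' v' where po': "is_pushout C m g u' v'" and "inflation E v'"
    using pushout_inflation_exists[of m g] mq sq(2) unfolding inflation_def by blast
  then obtain r where vr: "(v', r) \<in> E"
    unfolding inflation_def by blast
  note sq' = pushout_square[OF po']
  obtain \<phi> where \<phi>: "\<phi> \<in> Hom C (tgt C u') (tgt C u)" "\<phi> \<cdot> u' = u" "\<phi> \<cdot> v' = v"
    using pushout_factor[OF po' sq(3,4,5)] by blast
  obtain \<psi> where \<psi>: "\<psi> \<in> Hom C (tgt C u) (tgt C u')" "\<psi> \<cdot> u = u'" "\<psi> \<cdot> v = v'"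
    using pushout_factor[OF po sq'(3,4,5)] by blast
  have ob: "tgt C u \<in> cObj C" "tgt C u' \<in> cObj C"
    using hom_obj[OF \<phi>(1)] by auto
  have "\<psi> \<cdot> \<phi> = ident C (tgt C u')"
    using pushout_hom_eqI[OF po' comp_hom[OF \<phi>(1) \<psi>(1)] ident_hom[OF ob(2)]] \<phi> \<psi> sq'
      comp_assoc[OF sq'(3) \<phi>(1) \<psi>(1)] comp_assoc[OF sq'(4) \<phi>(1) \<psi>(1)] by simp
  moreover have "\<phi> \<cdot> \<psi> = ident C (tgt C u)"
    using pushout_hom_eqI[OF po comp_hom[OF \<psi>(1) \<phi>(1)] ident_hom[OF ob(1)]] \<phi> \<psi> sq
      comp_assoc[OF sq(3) \<psi>(1) \<phi>(1)] comp_assoc[OF sq(4) \<psi>(1) \<phi>(1)] by simp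
  ultimately have "iso C \<psi>"
    using isoI[OF \<psi>(1) \<phi>(1)] by blast
  then have "(v, r \<cdot> \<psi>) \<in> E"
    using conflation_change_middle[OF vr _ _ _ \<psi>(3)] sq(4) sq'(4) \<psi>(1) hom_src[OF sq'(4)]
      hom_tgt[OF sq'(4)] by simp
  then show ?thesis
    unfolding inflation_def by blast
qed

lemma pushout_biproduct_cancel:
  assumes e1: "(m1, q1) \<in> E" and e2: "(m2, q2) \<in> E" and po: "is_pushout C m1 m2 n1 n2"
    and bp: "biproduct S (tgt C q1) (tgt C q2) j1 j2 r1 r2"
    and q: "q \<in> Hom C (tgt C n1) S" and qn1: "q \<cdot> n1 = j1 \<cdot> q1" and qn2: "q \<cdot> n2 = j2 \<cdot> q2"
    and x: "x \<in> Hom C S T" and y: "y \<in> Hom C S T" and xy: "x \<cdot> q = y \<cdot> q"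
  shows "x = y"
proof -
  note sq = pushout_square[OF po]
  have j: "j1 \<in> Hom C (tgt C q1) S" "j2 \<in> Hom C (tgt C q2) S"
    using bp unfolding biproduct_def by blast+
  note n = sq(3,4)
  note qs = deflation_hom[OF e1] deflation_hom[OF e2]
  have through: "(z \<cdot> j1) \<cdot> q1 = (z \<cdot> q) \<cdot> n1" "(z \<cdot> j2) \<cdot> q2 = (z \<cdot> q) \<cdot> n2"
    if "z \<in> Hom C S T" for z
    using comp_assoc[OF qs(1) j(1) that] comp_assoc[OF n(1) q that]
      comp_assoc[OF qs(2) j(2) that] comp_assoc[OF n(2) q that] qn1 qn2 by simp_all
  show ?thesis
  proof (rule biproduct_hom_ext[OF bp x y])
    show "x \<cdot> j1 = y \<cdot> j1"
      using deflation_cancel[OF e1 comp_hom[OF j(1) x] comp_hom[OF j(1) y]]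
        through[OF x] through[OF y] xy by simp
    show "x \<cdot> j2 = y \<cdot> j2"
      using deflation_cancel[OF e2 comp_hom[OF j(2) x] comp_hom[OF j(2) y]]
        through[OF x] through[OF y] xy by simp
  qed
qed

lemma pushout_biproduct_factor:
  assumes e1: "(m1, q1) \<in> E" and e2: "(m2, q2) \<in> E" and po: "is_pushout C m1 m2 n1 n2"
    and bp: "biproduct S (tgt C q1) (tgt C q2) j1 j2 r1 r2"
    and q: "q \<in> Hom C (tgt C n1) S" and qn1: "q \<cdot> n1 = j1 \<cdot> q1" and qn2: "q \<cdot> n2 = j2 \<cdot> q2"
    and t: "t \<in> Hom C (tgt C n1) X" and tnm: "t \<cdot> (n1 \<cdot> m1) = \<zero>\<^bsub>src C m1,X\<^esub>"
  shows "\<exists>h \<in> Hom C S X. h \<cdot> q = t"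
proof -
  note sq = pushout_square[OF po]
  have j: "j1 \<in> Hom C (tgt C q1) S" "j2 \<in> Hom C (tgt C q2) S"
    using bp unfolding biproduct_def by blast+
  have m: "m1 \<in> Hom C (src C m1) (tgt C m1)" "m2 \<in> Hom C (src C m1) (tgt C m2)"
    using sq(1,2) by simp_all
  note n = sq(3,4)
  note qs = deflation_hom[OF e1] deflation_hom[OF e2]
  have "(t \<cdot> n1) \<cdot> m1 = \<zero>\<^bsub>src C m1,X\<^esub>" "(t \<cdot> n2) \<cdot> m2 = \<zero>\<^bsub>src C m1,X\<^esub>"
    using comp_assoc[OF m(1) n(1) t] comp_assoc[OF m(2) n(2) t] sq(5) tnm by simp_all
  then obtain g1 g2 where g: "g1 \<in> Hom C (tgt C q1) X" "g2 \<in> Hom C (tgt C q2) X"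
    and gq: "g1 \<cdot> q1 = t \<cdot> n1" "g2 \<cdot> q2 = t \<cdot> n2"
    using deflation_factor[OF e1 comp_hom[OF n(1) t]] deflation_factor[OF e2 comp_hom[OF n(2) t]]
      hom_src[OF m(2)] by metis
  define h where "h = g1 \<cdot> r1 \<oplus> g2 \<cdot> r2"
  note h = biproduct_copair[OF bp g, folded h_def]
  have "(h \<cdot> q) \<cdot> n1 = t \<cdot> n1" "(h \<cdot> q) \<cdot> n2 = t \<cdot> n2"
    using comp_assoc[OF n(1) q h(1)] comp_assoc[OF n(2) q h(1)] comp_assoc[OF qs(1) j(1) h(1)]
      comp_assoc[OF qs(2) j(2) h(1)] qn1 qn2 h(2,3) gq by simp_all
  then have "h \<cdot> q = t"
    using pushout_hom_eqI[OF po comp_hom[OF q h(1)] t] by blast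
  then show ?thesis
    using h(1) by blast
qed

lemma pushout_biproduct_map:
  assumes e1: "(m1, q1) \<in> E" and e2: "(m2, q2) \<in> E" and po: "is_pushout C m1 m2 n1 n2"
    and bp: "biproduct S (tgt C q1) (tgt C q2) j1 j2 r1 r2"
  shows "\<exists>q \<in> Hom C (tgt C n1) S. q \<cdot> n1 = j1 \<cdot> q1 \<and> q \<cdot> n2 = j2 \<cdot> q2"
proof -
  note sq = pushout_square[OF po]
  have j: "j1 \<in> Hom C (tgt C q1) S" "j2 \<in> Hom C (tgt C q2) S"
    using bp unfolding biproduct_def by blast+
  have ob: "src C m1 \<in> cObj C"
    using hom_obj[OF sq(1)] by blast
  have "(j1 \<cdot> q1) \<cdot> m1 = \<zero>\<^bsub>src C m1,S\<^esub>" "(j2 \<cdot> q2) \<cdot> m2 = \<zero>\<^bsub>src C m1,S\<^esub>"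
    using comp_assoc[OF sq(1) deflation_hom[OF e1] j(1), symmetric]
      comp_assoc[OF sq(2) deflation_hom[OF e2] j(2), symmetric] hom_src[OF sq(2)]
      deflation_comp_inflation[OF e1] deflation_comp_inflation[OF e2] j ob by simp_all
  then show ?thesis
    using pushout_factor[OF po, of "j1 \<cdot> q1" S "j2 \<cdot> q2"] comp_hom[OF deflation_hom[OF e1] j(1)]
      comp_hom[OF deflation_hom[OF e2] j(2)] by simp
qed

lemma pushout_composite_conflation:
  assumes e1: "(m1, q1) \<in> E" and e2: "(m2, q2) \<in> E" and po: "is_pushout C m1 m2 n1 n2"
    and bp: "biproduct S (tgt C q1) (tgt C q2) j1 j2 r1 r2"
  shows "\<exists>q \<in> Hom C (tgt C n1) S. (n1 \<cdot> m1, q) \<in> E \<and> q \<cdot> n1 = j1 \<cdot> q1 \<and> q \<cdot> n2 = j2 \<cdot> q2"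
proof -
  obtain q where q: "q \<in> Hom C (tgt C n1) S" and qn: "q \<cdot> n1 = j1 \<cdot> q1" "q \<cdot> n2 = j2 \<cdot> q2"
    using pushout_biproduct_map[OF e1 e2 po bp] by blast
  note sq = pushout_square[OF po]
  note n1 = sq(3)
  have j1: "j1 \<in> Hom C (tgt C q1) S" and obS: "S \<in> cObj C"
    using bp unfolding biproduct_def by simp_all
  have "inflation E (n1 \<cdot> m1)"
    using inflation_comp[OF _ pushout_inflation[OF e2 pushout_sym[OF po]], of m1] e1
      hom_src[OF n1] unfolding inflation_def by auto
  then obtain s where es: "(n1 \<cdot> m1, s) \<in> E"
    unfolding inflation_def by blast
  have nm: "n1 \<cdot> m1 \<in> Hom C (src C m1) (tgt C n1)"
    using sq(1) n1 by blast
  have s: "s \<in> Hom C (tgt C n1) (tgt C s)"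
    using deflation_hom[OF es] hom_tgt[OF nm] by simp
  obtain h where h: "h \<in> Hom C S (tgt C s)" and hq: "h \<cdot> q = s"
    using pushout_biproduct_factor[OF e1 e2 po bp q qn s] deflation_comp_inflation[OF es]
      hom_src[OF nm] by auto
  have "q \<cdot> (n1 \<cdot> m1) = \<zero>\<^bsub>src C m1,S\<^esub>"
    using comp_assoc[OF sq(1) n1 q] comp_assoc[OF sq(1) deflation_hom[OF e1] j1, symmetric] qn
      deflation_comp_inflation[OF e1] j1 hom_obj[OF sq(1)] by simp
  then obtain k where k: "k \<in> Hom C (tgt C s) S" and ks: "k \<cdot> s = q"
    using deflation_factor[OF es, of q S] q hom_src[OF nm] hom_tgt[OF nm] by auto
  have "(k \<cdot> h) \<cdot> q = ident C S \<cdot> q"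
    using comp_assoc[OF q h k] hq ks q by simp
  then have "k \<cdot> h = ident C S"
    using pushout_biproduct_cancel[OF e1 e2 po bp q qn comp_hom[OF h k] ident_hom[OF obS]] by blast
  then have "(n1 \<cdot> m1, q) \<in> E"
    using conflation_change_deflation[OF es _ h k hq ks] q hom_tgt[OF nm] by simp
  then show ?thesis
    using q qn by blast
qed

lemma confl_pushout_morphism:
  assumes po: "confl_pushout C E m p f m1 p1" and po': "confl_pushout C E m' p' f m1' p1'"
    and d: "d \<in> Hom C (tgt C m') (tgt C m)" and \<iota>: "\<iota> \<in> Hom C (tgt C p') (tgt C p)"
    and dm': "d \<cdot> m' = m" and pd: "p \<cdot> d = \<iota> \<cdot> p'"
  shows "\<exists>k \<in> Hom C (tgt C m1') (tgt C m1). p1 \<cdot> k = \<iota> \<cdot> p1'"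
proof -
  obtain c where e1: "(m1, p1) \<in> E" and tp1: "tgt C p1 = tgt C p"
    and poc: "is_pushout C m f c m1" and p1c: "p1 \<cdot> c = p"
    using po unfolding confl_pushout_def by blast
  obtain c' where e1': "(m1', p1') \<in> E" and tp1': "tgt C p1' = tgt C p'"
    and poc': "is_pushout C m' f c' m1'" and p1c': "p1' \<cdot> c' = p'"
    using po' unfolding confl_pushout_def by blast
  note sq = pushout_square[OF poc] and sq' = pushout_square[OF poc']
  have c: "c \<in> Hom C (tgt C m) (tgt C m1)" and m1: "m1 \<in> Hom C (tgt C f) (tgt C m1)"
    and p1: "p1 \<in> Hom C (tgt C m1) (tgt C p)"
    using sq(3,4) hom_tgt[OF sq(4)] deflation_hom[OF e1] tp1 by simp_all
  have c': "c' \<in> Hom C (tgt C m') (tgt C m1')" and m1': "m1' \<in> Hom C (tgt C f) (tgt C m1')"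
    and p1': "p1' \<in> Hom C (tgt C m1') (tgt C p')"
    using sq'(3,4) hom_tgt[OF sq'(4)] deflation_hom[OF e1'] tp1' hom_tgt[OF sq'(2)] by simp_all
  have tc': "tgt C c' = tgt C m1'"
    using hom_tgt[OF sq'(4)] ..
  have "(c \<cdot> d) \<cdot> m' = m1 \<cdot> f"
    using comp_assoc[OF sq'(1) d c] dm' sq(5) by simp
  then obtain k where k: "k \<in> Hom C (tgt C m1') (tgt C m1)" and kc': "k \<cdot> c' = c \<cdot> d"
    and km1': "k \<cdot> m1' = m1"
    using pushout_factor[OF poc' comp_hom[OF d c] m1, unfolded tc'] by blast
  have "(p1 \<cdot> k) \<cdot> c' = (\<iota> \<cdot> p1') \<cdot> c'"
    using comp_assoc[OF c' k p1] comp_assoc[OF d c p1] comp_assoc[OF c' p1' \<iota>] kc' p1c p1c' pd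
    by simp
  moreover have "(p1 \<cdot> k) \<cdot> m1' = (\<iota> \<cdot> p1') \<cdot> m1'"
    using comp_assoc[OF m1' k p1] comp_assoc[OF m1' p1' \<iota>] km1' \<iota> hom_obj[OF m1]
      deflation_comp_inflation[OF e1] deflation_comp_inflation[OF e1'] hom_src[OF m1]
      hom_src[OF m1'] tp1 tp1' by simp
  ultimately have "p1 \<cdot> k = \<iota> \<cdot> p1'"
    using pushout_hom_eqI[OF poc', unfolded tc', OF comp_hom[OF k p1] comp_hom[OF p1' \<iota>]]
    by blast
  with k show ?thesis
    by blast
qed

end

section \<open>Ext-orthogonality\<close>

context exact_cat
begin

lemma ext_orth_deflation_lift:
  assumes e: "(m, p) \<in> E" and f: "f \<in> Hom C (src C m) Y" and po: "confl_pushout C E m p f m1 p1"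
    and a: "a \<in> Hom C A (tgt C p)" and orth: "ext_orth C E a f"
  shows "\<exists>g \<in> Hom C A (tgt C m1). p1 \<cdot> g = a"
proof -
  have e1: "(m1, p1) \<in> E" and tp1: "tgt C p1 = tgt C p"
    using po unfolding confl_pushout_def by auto
  obtain m2 p2 where pb: "confl_pullback C E m1 p1 a m2 p2"
    using confl_pullback_exists[OF e1, of a A] a tp1 by auto
  then obtain d where e2: "(m2, p2) \<in> E" and tp2: "tgt C p2 = A"
    and pbd: "is_pullback C d p2 p1 a"
    using hom_src[OF a] unfolding confl_pullback_def by auto
  have "split_confl C m2 p2"
    using orth e po pb hom_src[OF f] hom_tgt[OF a] unfolding ext_orth_def by auto
  then obtain \<sigma> where \<sigma>: "\<sigma> \<in> Hom C A (tgt C m2)" and p2\<sigma>: "p2 \<cdot> \<sigma> = ident C A"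
    using split_confl_section[OF e2] tp2 by auto
  note sq = pullback_square[OF pbd]
  have p1: "p1 \<in> Hom C (tgt C m1) (tgt C p)" and p2: "p2 \<in> Hom C (tgt C m2) A"
    using deflation_hom[OF e1] deflation_hom[OF e2] tp1 tp2 by simp_all
  have d: "d \<in> Hom C (tgt C m2) (tgt C m1)"
    using sq(1) hom_src[OF sq(2)] hom_src[OF sq(3)] hom_src[OF p1] hom_src[OF p2] by simp
  have "p1 \<cdot> (d \<cdot> \<sigma>) = a"
    using comp_assoc[OF \<sigma> d p1] comp_assoc[OF \<sigma> p2 a] sq(5) p2\<sigma> a by simp
  then show ?thesis
    using comp_hom[OF \<sigma> d] by blast
qed

lemma ext_orth_pushout_lift:
  assumes mp: "(m, p) \<in> E" and f: "f \<in> Hom C (src C m) Y" and po: "confl_pushout C E m p f m1 p1"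
    and \<iota>: "\<iota> \<in> Hom C A' (tgt C p)" and a: "a \<in> Hom C A A'" and orth: "ext_orth C E a f"
  shows "\<exists>g \<in> Hom C A (tgt C m1). p1 \<cdot> g = \<iota> \<cdot> a"
proof -
  obtain m' p' d where e': "(m', p') \<in> E" and sm': "src C m' = src C m" and tp': "tgt C p' = A'"
    and pbd: "is_pullback C d p' p \<iota>" and d: "d \<in> Hom C (tgt C m') (tgt C m)" and dm': "d \<cdot> m' = m"
    using confl_pullback_exists[OF mp \<iota>] hom_src[OF \<iota>] unfolding confl_pullback_def by auto
  obtain m1' p1' where po': "confl_pushout C E m' p' f m1' p1'"
    using confl_pushout_exists[OF e', of f Y] f sm' by auto
  obtain g' where g': "g' \<in> Hom C A (tgt C m1')" and p1g': "p1' \<cdot> g' = a"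
    using ext_orth_deflation_lift[OF e' _ po' _ orth] f sm' a tp' by auto
  obtain k where k: "k \<in> Hom C (tgt C m1') (tgt C m1)" and p1k: "p1 \<cdot> k = \<iota> \<cdot> p1'"
    using confl_pushout_morphism[OF po po' d _ dm' pullback_square(5)[OF pbd]] \<iota> tp' by auto
  have p1: "p1 \<in> Hom C (tgt C m1) (tgt C p)" and p1': "p1' \<in> Hom C (tgt C m1') A'"
    using po po' deflation_hom tp' unfolding confl_pushout_def by fastforce+
  have "p1 \<cdot> (k \<cdot> g') = \<iota> \<cdot> a"
    using comp_assoc[OF g' k p1] comp_assoc[OF g' p1' \<iota>] p1k p1g' by simp
  then show ?thesis
    using comp_hom[OF g' k] by blast
qed

lemma ext_orth_lift:
  assumes mp: "(m, p) \<in> E" and f: "f \<in> Hom C (src C m) Y" and a: "a \<in> Hom C S (tgt C p)"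
    and po: "confl_pushout C E m p f m1 p1" and pb: "confl_pullback C E m1 p1 a m2 p2"
    and \<iota>': "\<iota>' \<in> Hom C A1' (tgt C p)" and \<iota>: "\<iota> \<in> Hom C A1 S" and a1: "a1 \<in> Hom C A1 A1'"
    and comm: "a \<cdot> \<iota> = \<iota>' \<cdot> a1" and orth: "ext_orth C E a1 f"
  shows "\<exists>\<sigma> \<in> Hom C A1 (tgt C m2). p2 \<cdot> \<sigma> = \<iota>"
proof -
  obtain g where g: "g \<in> Hom C A1 (tgt C m1)" and p1g: "p1 \<cdot> g = \<iota>' \<cdot> a1"
    using ext_orth_pushout_lift[OF mp f po \<iota>' a1 orth] by blast
  obtain d where pbd: "is_pullback C d p2 p1 a" and e2: "(m2, p2) \<in> E" and tp2: "tgt C p2 = S"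
    using pb hom_src[OF a] unfolding confl_pullback_def by auto
  have e1: "(m1, p1) \<in> E"
    using po unfolding confl_pushout_def by blast
  have "src C d = tgt C m2" "tgt C d = tgt C m1"
    using pullback_square(2,3)[OF pbd] deflation_hom[OF e2] deflation_hom[OF e1]
    by (metis hom_src)+
  then show ?thesis
    using pullback_factor[OF pbd, of g A1 \<iota>] g \<iota> tp2 comm p1g by auto
qed

lemma ext_orth_biproduct:
  assumes bp: "biproduct S A1 A2 j1 j2 r1 r2" and a: "a \<in> Hom C S S'"
    and \<iota>1: "\<iota>1 \<in> Hom C A1' S'" and \<iota>2: "\<iota>2 \<in> Hom C A2' S'"
    and a1: "a1 \<in> Hom C A1 A1'" and a2: "a2 \<in> Hom C A2 A2'"
    and comm1: "a \<cdot> j1 = \<iota>1 \<cdot> a1" and comm2: "a \<cdot> j2 = \<iota>2 \<cdot> a2"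
    and orth1: "ext_orth C E a1 f" and orth2: "ext_orth C E a2 f"
  shows "ext_orth C E a f"
  unfolding ext_orth_def
proof (intro conjI allI impI)
  have j: "j1 \<in> Hom C A1 S" "j2 \<in> Hom C A2 S" and obS: "S \<in> cObj C"
    using bp unfolding biproduct_def by blast+
  show "a \<in> cMor C"
    using a by (rule hom_mor)
  show "f \<in> cMor C"
    using orth1 unfolding ext_orth_def by blast
  fix m p m1 p1 m2 p2
  assume "(m, p) \<in> E \<and> src C m = src C f \<and> tgt C p = tgt C a \<and>
    confl_pushout C E m p f m1 p1 \<and> confl_pullback C E m1 p1 a m2 p2"
  then have mp: "(m, p) \<in> E" and f: "f \<in> Hom C (src C m) (tgt C f)" and tp: "tgt C p = S'"
    and po: "confl_pushout C E m p f m1 p1" and pb: "confl_pullback C E m1 p1 a m2 p2"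
    using hom_tgt[OF a] \<open>f \<in> cMor C\<close> by (auto simp: Hom_def)
  obtain \<sigma>1 \<sigma>2 where \<sigma>: "\<sigma>1 \<in> Hom C A1 (tgt C m2)" "\<sigma>2 \<in> Hom C A2 (tgt C m2)"
    and p2\<sigma>: "p2 \<cdot> \<sigma>1 = j1" "p2 \<cdot> \<sigma>2 = j2"
    using ext_orth_lift[OF mp f _ po pb _ j(1) a1 comm1 orth1]
      ext_orth_lift[OF mp f _ po pb _ j(2) a2 comm2 orth2] a \<iota>1 \<iota>2 tp by auto
  define s where "s = \<sigma>1 \<cdot> r1 \<oplus> \<sigma>2 \<cdot> r2"
  note s = biproduct_copair[OF bp \<sigma>, folded s_def]
  have e2: "(m2, p2) \<in> E" and tp2: "tgt C p2 = S"
    using pb hom_src[OF a] unfolding confl_pullback_def by auto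
  have p2: "p2 \<in> Hom C (tgt C m2) S"
    using deflation_hom[OF e2] tp2 by simp
  have "p2 \<cdot> s = ident C S"
  proof (rule biproduct_hom_ext[OF bp comp_hom[OF s(1) p2] ident_hom[OF obS]])
    show "(p2 \<cdot> s) \<cdot> j1 = ident C S \<cdot> j1" "(p2 \<cdot> s) \<cdot> j2 = ident C S \<cdot> j2"
      using comp_assoc[OF j(1) s(1) p2] comp_assoc[OF j(2) s(1) p2] s(2,3) p2\<sigma> j by simp_all
  qed
  then show "split_confl C m2 p2"
    using split_conflI[OF e2] s(1) tp2 by simp
qed

end

section \<open>Special preenvelopes\<close>

context exact_cat
begin

text \<open>\<open>(1, c, a)\<close> is a morphism from the conflation \<open>(j, q0)\<close> to \<open>(i, q)\<close> which is the identity
  on the first term, as in the definition of a special preenvelope.\<close>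

definition confl_morphism :: "'m \<Rightarrow> 'm \<Rightarrow> 'm \<Rightarrow> 'm \<Rightarrow> 'm \<Rightarrow> 'm \<Rightarrow> bool" where
  "confl_morphism j q0 i q c a \<longleftrightarrow> (j, q0) \<in> E \<and> (i, q) \<in> E \<and> src C i = src C j \<and>
     c \<in> Hom C (tgt C j) (tgt C i) \<and> a \<in> Hom C (tgt C q0) (tgt C q) \<and> c \<cdot> j = i \<and> q \<cdot> c = a \<cdot> q0"

lemma confl_morphismD:
  assumes "confl_morphism j q0 i q c a"
  shows "(j, q0) \<in> E" "(i, q) \<in> E" "src C i = src C j" "c \<in> Hom C (tgt C j) (tgt C i)"
    "a \<in> Hom C (tgt C q0) (tgt C q)" "c \<cdot> j = i" "q \<cdot> c = a \<cdot> q0"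
  using assms unfolding confl_morphism_def by simp_all

lemma special_preenvelope_iff:
  "special_preenvelope C E J B j \<longleftrightarrow> B \<in> cObj C \<and> j \<in> J \<and> src C j = B \<and>
    (\<exists>q0 i q c a. confl_morphism j q0 i q c a \<and> a \<in> perp_ideal C E J)"
  unfolding special_preenvelope_def confl_morphism_def
  by (smt (verit) comp_ident inflation_hom)

lemma pushout_map_between_pushouts:
  assumes cm1: "confl_morphism m1 q01 i1 q1 c1 a1" and cm2: "confl_morphism m2 q02 i2 q2 c2 a2"
    and po: "is_pushout C m1 m2 n1 n2" and po': "is_pushout C i1 i2 u v"
  shows "\<exists>c \<in> Hom C (tgt C n1) (tgt C u).
    c \<cdot> n1 = u \<cdot> c1 \<and> c \<cdot> n2 = v \<cdot> c2 \<and> c \<cdot> (n1 \<cdot> m1) = u \<cdot> i1"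
proof -
  note c1 = confl_morphismD(4,6)[OF cm1] and c2 = confl_morphismD(4,6)[OF cm2]
  note sq = pushout_square[OF po] and sq' = pushout_square[OF po']
  note u = sq'(3) and v = sq'(4) and n1 = sq(3)
  have ucm: "(u \<cdot> c1) \<cdot> m1 = u \<cdot> i1" "(v \<cdot> c2) \<cdot> m2 = v \<cdot> i2"
    using comp_assoc[OF sq(1) c1(1) u] comp_assoc[OF sq(2) c2(1) v] c1(2) c2(2) hom_src[OF sq(2)]
    by simp_all
  then obtain c where c: "c \<in> Hom C (tgt C n1) (tgt C u)"
    and cn: "c \<cdot> n1 = u \<cdot> c1" "c \<cdot> n2 = v \<cdot> c2"
    using pushout_factor[OF po comp_hom[OF c1(1) u] comp_hom[OF c2(1) v]] sq'(5) by auto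
  moreover have "c \<cdot> (n1 \<cdot> m1) = u \<cdot> i1"
    using comp_assoc[OF sq(1) n1 c] cn ucm by simp
  ultimately show ?thesis
    by blast
qed

lemma pushout_biproduct_square:
  assumes cm1: "confl_morphism m1 q01 i1 q1 c1 a1" and cm2: "confl_morphism m2 q02 i2 q2 c2 a2"
    and po: "is_pushout C m1 m2 n1 n2" and po': "is_pushout C i1 i2 u v"
    and bp: "biproduct S (tgt C q01) (tgt C q02) j1 j2 r1 r2"
    and j1': "j1' \<in> Hom C (tgt C q1) S'" and j2': "j2' \<in> Hom C (tgt C q2) S'"
    and q: "q \<in> Hom C (tgt C n1) S" and qn: "q \<cdot> n1 = j1 \<cdot> q01" "q \<cdot> n2 = j2 \<cdot> q02"
    and q': "q' \<in> Hom C (tgt C u) S'" and qu: "q' \<cdot> u = j1' \<cdot> q1" "q' \<cdot> v = j2' \<cdot> q2"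
    and c: "c \<in> Hom C (tgt C n1) (tgt C u)" and cn: "c \<cdot> n1 = u \<cdot> c1" "c \<cdot> n2 = v \<cdot> c2"
  shows "q' \<cdot> c = ((j1' \<cdot> a1) \<cdot> r1 \<oplus> (j2' \<cdot> a2) \<cdot> r2) \<cdot> q"
proof -
  note c1 = confl_morphismD(4,7)[OF cm1] and a1 = confl_morphismD(5)[OF cm1]
    and c2 = confl_morphismD(4,7)[OF cm2] and a2 = confl_morphismD(5)[OF cm2]
  note qs = deflation_hom[OF confl_morphismD(1)[OF cm1]]
    deflation_hom[OF confl_morphismD(1)[OF cm2]]
    deflation_hom[OF confl_morphismD(2)[OF cm1]] deflation_hom[OF confl_morphismD(2)[OF cm2]]
  note n = pushout_square(3,4)[OF po] and uv = pushout_square(3,4)[OF po']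
  have j: "j1 \<in> Hom C (tgt C q01) S" "j2 \<in> Hom C (tgt C q02) S"
    using bp unfolding biproduct_def by blast+
  define a where "a = (j1' \<cdot> a1) \<cdot> r1 \<oplus> (j2' \<cdot> a2) \<cdot> r2"
  note a = biproduct_copair[OF bp comp_hom[OF a1 j1'] comp_hom[OF a2 j2'], folded a_def]
  have "(q' \<cdot> c) \<cdot> n1 = (j1' \<cdot> q1) \<cdot> c1"
    using comp_assoc[OF n(1) c q'] comp_assoc[OF c1(1) uv(1) q'] cn qu by simp
  also have "\<dots> = (a \<cdot> j1) \<cdot> q01"
    using comp_assoc[OF c1(1) qs(3) j1'] comp_assoc[OF qs(1) a1 j1'] c1(2) a(2) by simp
  also have "\<dots> = (a \<cdot> q) \<cdot> n1"
    using comp_assoc[OF qs(1) j(1) a(1)] comp_assoc[OF n(1) q a(1)] qn by simp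
  finally have "(q' \<cdot> c) \<cdot> n1 = (a \<cdot> q) \<cdot> n1" .
  moreover have "(q' \<cdot> c) \<cdot> n2 = (j2' \<cdot> q2) \<cdot> c2"
    using comp_assoc[OF n(2) c q'] comp_assoc[OF c2(1) uv(2) q'] cn qu by simp
  moreover have "\<dots> = (a \<cdot> j2) \<cdot> q02"
    using comp_assoc[OF c2(1) qs(4) j2'] comp_assoc[OF qs(2) a2 j2'] c2(2) a(3) by simp
  moreover have "\<dots> = (a \<cdot> q) \<cdot> n2"
    using comp_assoc[OF qs(2) j(2) a(1)] comp_assoc[OF n(2) q a(1)] qn by simp
  ultimately show ?thesis
    using pushout_hom_eqI[OF po comp_hom[OF c q'] comp_hom[OF q a(1)]] unfolding a_def by simp
qed

lemma confl_morphism_pushout: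
  assumes cm1: "confl_morphism m1 q01 i1 q1 c1 a1" and cm2: "confl_morphism m2 q02 i2 q2 c2 a2"
    and po: "is_pushout C m1 m2 n1 n2"
    and bp: "biproduct S (tgt C q01) (tgt C q02) j1 j2 r1 r2"
    and bp': "biproduct S' (tgt C q1) (tgt C q2) j1' j2' r1' r2'"
  shows "\<exists>q i q' c. confl_morphism (n1 \<cdot> m1) q i q' c ((j1' \<cdot> a1) \<cdot> r1 \<oplus> (j2' \<cdot> a2) \<cdot> r2)"
proof -
  note e1 = confl_morphismD(2)[OF cm1] and e2 = confl_morphismD(2)[OF cm2]
  note sq = pushout_square[OF po]
  obtain q where q: "q \<in> Hom C (tgt C n1) S" and eq: "(n1 \<cdot> m1, q) \<in> E"
    and qn: "q \<cdot> n1 = j1 \<cdot> q01" "q \<cdot> n2 = j2 \<cdot> q02"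
    using pushout_composite_conflation[OF confl_morphismD(1)[OF cm1] confl_morphismD(1)[OF cm2]
        po bp] by blast
  obtain u v where po': "is_pushout C i1 i2 u v"
    using pushout_inflation_exists[of i1 i2 "tgt C i2"] e1 inflation_hom[OF e2]
      confl_morphismD(3)[OF cm1] confl_morphismD(3)[OF cm2] hom_src[OF sq(2)]
    unfolding inflation_def by auto
  obtain q' where q': "q' \<in> Hom C (tgt C u) S'" and eq': "(u \<cdot> i1, q') \<in> E"
    and qu: "q' \<cdot> u = j1' \<cdot> q1" "q' \<cdot> v = j2' \<cdot> q2"
    using pushout_composite_conflation[OF e1 e2 po' bp'] by blast
  obtain c where c: "c \<in> Hom C (tgt C n1) (tgt C u)" and cn: "c \<cdot> n1 = u \<cdot> c1" "c \<cdot> n2 = v \<cdot> c2"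
    and cnm: "c \<cdot> (n1 \<cdot> m1) = u \<cdot> i1"
    using pushout_map_between_pushouts[OF cm1 cm2 po po'] by blast
  have j': "j1' \<in> Hom C (tgt C q1) S'" "j2' \<in> Hom C (tgt C q2) S'"
    using bp' unfolding biproduct_def by blast+
  define a where "a = (j1' \<cdot> a1) \<cdot> r1 \<oplus> (j2' \<cdot> a2) \<cdot> r2"
  have a: "a \<in> Hom C S S'"
    unfolding a_def using biproduct_copair(1)[OF bp] j' confl_morphismD(5)[OF cm1]
      confl_morphismD(5)[OF cm2] by blast
  have "q' \<cdot> c = a \<cdot> q"
    using pushout_biproduct_square[OF cm1 cm2 po po' bp j' q qn q' qu c cn] unfolding a_def .
  then have "confl_morphism (n1 \<cdot> m1) q (u \<cdot> i1) q' c a"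
    unfolding confl_morphism_def
    using eq eq' c a cnm hom_tgt[OF q] hom_tgt[OF q'] confl_morphismD(3)[OF cm1]
      comp_hom[OF sq(1) sq(3)] comp_hom[OF pushout_square(1,3)[OF po']]
    by (simp add: hom_src hom_tgt)
  then show ?thesis
    unfolding a_def by blast
qed

lemma special_preenvelope_pushout:
  assumes I1: "ideal C J1" and I2: "ideal C J2"
    and sp1: "special_preenvelope C E J1 B m1" and sp2: "special_preenvelope C E J2 B m2"
    and po: "is_pushout C m1 m2 n1 n2"
  shows "special_preenvelope C E (J1 \<inter> J2) B (n1 \<cdot> m1)"
proof -
  obtain q01 i1 q1 c1 a1 where B: "B \<in> cObj C" and m1: "m1 \<in> J1" and sm1: "src C m1 = B"
    and cm1: "confl_morphism m1 q01 i1 q1 c1 a1" and a1J: "a1 \<in> perp_ideal C E J1"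
    using sp1 unfolding special_preenvelope_iff by blast
  obtain q02 i2 q2 c2 a2 where m2: "m2 \<in> J2"
    and cm2: "confl_morphism m2 q02 i2 q2 c2 a2" and a2J: "a2 \<in> perp_ideal C E J2"
    using sp2 unfolding special_preenvelope_iff by blast
  note a1 = confl_morphismD(5)[OF cm1] and a2 = confl_morphismD(5)[OF cm2]
  obtain S j1 j2 r1 r2 where bp: "biproduct S (tgt C q01) (tgt C q02) j1 j2 r1 r2"
    using biproduct_exists hom_obj[OF a1] hom_obj[OF a2] by blast
  obtain S' j1' j2' r1' r2' where bp': "biproduct S' (tgt C q1) (tgt C q2) j1' j2' r1' r2'"
    using biproduct_exists hom_obj[OF a1] hom_obj[OF a2] by blast
  have j': "j1' \<in> Hom C (tgt C q1) S'" "j2' \<in> Hom C (tgt C q2) S'"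
    using bp' unfolding biproduct_def by blast+
  define a where "a = (j1' \<cdot> a1) \<cdot> r1 \<oplus> (j2' \<cdot> a2) \<cdot> r2"
  note a = biproduct_copair[OF bp comp_hom[OF a1 j'(1)] comp_hom[OF a2 j'(2)], folded a_def]
  obtain q i q' c where cm: "confl_morphism (n1 \<cdot> m1) q i q' c a"
    using confl_morphism_pushout[OF cm1 cm2 po bp bp'] unfolding a_def by blast
  have "a \<in> perp_ideal C E (J1 \<inter> J2)"
    using ext_orth_biproduct[OF bp a(1) j' a1 a2 a(2,3)] a1J a2J hom_mor[OF a(1)]
    unfolding perp_ideal_def by blast
  moreover have "n1 \<cdot> m1 \<in> J1 \<inter> J2"
    using ideal_comp_left[OF I1 m1, of n1] ideal_comp_left[OF I2 m2, of n2] pushout_square[OF po]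
    by (simp add: Hom_def)
  ultimately show ?thesis
    unfolding special_preenvelope_iff using B cm sm1 pushout_square(1,3)[OF po] comp_hom
    by (metis hom_src)
qed

lemma special_preenveloping_Int:
  assumes I1: "ideal C J1" and I2: "ideal C J2"
    and env1: "special_preenveloping C E J1" and env2: "special_preenveloping C E J2"
  shows "special_preenveloping C E (J1 \<inter> J2)"
  unfolding special_preenveloping_def
proof
  fix B
  assume "B \<in> cObj C"
  then obtain m1 m2 where sp1: "special_preenvelope C E J1 B m1"
    and sp2: "special_preenvelope C E J2 B m2"
    using env1 env2 unfolding special_preenveloping_def by blast
  then obtain q1 q2 where "(m1, q1) \<in> E" "(m2, q2) \<in> E" "src C m1 = B" "src C m2 = B"
    unfolding special_preenvelope_def by blast
  then obtain n1 n2 where "is_pushout C m1 m2 n1 n2"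
    using pushout_inflation_exists[of m1 m2 "tgt C m2"] inflation_hom[of m2 q2]
    unfolding inflation_def by auto
  then show "\<exists>j. special_preenvelope C E (J1 \<inter> J2) B j"
    using special_preenvelope_pushout[OF I1 I2 sp1 sp2] by blast
qed

end

theorem theorem3p1:
  fixes C :: "('o, 'm) addcat" and E :: "('m \<times> 'm) set" and J1 J2 :: "'m set"
  assumes "exact_category C E"
    and "ideal C J1" and "ideal C J2"
    and "special_preenveloping C E J1" and "special_preenveloping C E J2"
  shows "ideal C (J1 \<inter> J2) \<and> special_preenveloping C E (J1 \<inter> J2) \<and>
    (\<forall>B m1 m2 n1 n2. special_preenvelope C E J1 B m1 \<and> special_preenvelope C E J2 B m2 \<and>
        is_pushout C m1 m2 n1 n2 \<longrightarrow>
        special_preenvelope C E (J1 \<inter> J2) B (cmp C n1 m1))"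
proof -
  have "preadditive C"
    using assms(1) unfolding exact_category_def additive_def by blast
  then interpret exact_cat C E
    using assms(1) by (intro exact_cat.intro preadditive_cat.intro exact_cat_axioms.intro)
  show ?thesis
    using ideal_Int[OF assms(2,3)] special_preenveloping_Int[OF assms(2-5)]
      special_preenvelope_pushout[OF assms(2,3)] by blast
qed

end
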